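(* Let $\Phi:\mathbb{M}_k\to\mathbb{M}_n$ be a unital positive linear map. Then the map $A\mapsto\mathrm{Tr}\big[\Phi(A^p)^{-1/p}\big]$ on positive definite matrices $A\in\mathbb{M}_k$ is convex for all $p\in[-1,1]\setminus\{0\}$.
   Context: $\mathbb{M}_n$ denotes $n\times n$ complex matrices, $\mathrm{Tr}$ the trace. A linear map is positive if it maps positive semidefinite matrices to positive semidefinite matrices, and unital if $\Phi(I)=I$. *)

theory Defs
  imports Complex_Main "Jordan_Normal_Form.Schur_Decomposition"
begin

definition quad_form :: "complex mat \<Rightarrow> complex vec \<Rightarrow> complex" where
  "quad_form A v = conjugate v \<bullet> (A *\<^sub>v v)"

definition psd_mat :: "nat \<Rightarrow> complex mat \<Rightarrow> bool" where
  "psd_mat n A \<longleftrightarrow> A \<in> carrier_mat n n \<and>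
     (\<forall>v \<in> carrier_vec n. Im (quad_form A v) = 0 \<and> Re (quad_form A v) \<ge> 0)"

definition pd_mat :: "nat \<Rightarrow> complex mat \<Rightarrow> bool" where
  "pd_mat n A \<longleftrightarrow> A \<in> carrier_mat n n \<and>
     (\<forall>v \<in> carrier_vec n. v \<noteq> 0\<^sub>v n \<longrightarrow> Im (quad_form A v) = 0 \<and> Re (quad_form A v) > 0)"

definition real_diag_mat :: "nat \<Rightarrow> (nat \<Rightarrow> real) \<Rightarrow> complex mat" where
  "real_diag_mat n d = mat n n (\<lambda>(i,j). if i = j then complex_of_real (d i) else 0)"

definition unitary_mat :: "nat \<Rightarrow> complex mat \<Rightarrow> bool" where
  "unitary_mat n U \<longleftrightarrow> U \<in> carrier_mat n n \<and> mat_adjoint U * U = 1\<^sub>m n \<and> U * mat_adjoint U = 1\<^sub>m n"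

(* Real power A^r of a positive definite matrix via the functional calculus:
   if A = U diag(d) U^* with U unitary and d > 0, then A^r = U diag(d^r) U^*.
   (This is well defined, i.e. independent of the diagonalisation.) *)
definition mat_rpow :: "complex mat \<Rightarrow> real \<Rightarrow> complex mat" where
  "mat_rpow A r = (THE B. \<exists>U d. unitary_mat (dim_row A) U \<and> (\<forall>i < dim_row A. d i > 0) \<and>
       A = U * real_diag_mat (dim_row A) d * mat_adjoint U \<and>
       B = U * real_diag_mat (dim_row A) (\<lambda>i. d i powr r) * mat_adjoint U)"

definition trace_mat :: "complex mat \<Rightarrow> complex" where
  "trace_mat A = (\<Sum>i < dim_row A. A $$ (i,i))"

definition linear_mat_map :: "nat \<Rightarrow> nat \<Rightarrow> (complex mat \<Rightarrow> complex mat) \<Rightarrow> bool" where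
  "linear_mat_map k n \<Phi> \<longleftrightarrow>
     (\<forall>A \<in> carrier_mat k k. \<Phi> A \<in> carrier_mat n n) \<and>
     (\<forall>A \<in> carrier_mat k k. \<forall>B \<in> carrier_mat k k. \<Phi> (A + B) = \<Phi> A + \<Phi> B) \<and>
     (\<forall>c. \<forall>A \<in> carrier_mat k k. \<Phi> (c \<cdot>\<^sub>m A) = c \<cdot>\<^sub>m \<Phi> A)"

definition positive_mat_map :: "nat \<Rightarrow> nat \<Rightarrow> (complex mat \<Rightarrow> complex mat) \<Rightarrow> bool" where
  "positive_mat_map k n \<Phi> \<longleftrightarrow> (\<forall>A. psd_mat k A \<longrightarrow> psd_mat n (\<Phi> A))"

definition unital_mat_map :: "nat \<Rightarrow> nat \<Rightarrow> (complex mat \<Rightarrow> complex mat) \<Rightarrow> bool" where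
  "unital_mat_map k n \<Phi> \<longleftrightarrow> \<Phi> (1\<^sub>m k) = 1\<^sub>m n"

end

theory Submission
  imports Defs "Jordan_Normal_Form.Spectral_Radius" "HOL-Analysis.Analysis"
begin

(* For 0 < p <= 1 the power x^p is operator concave, and for -1 <= p < 0 it is operator convex:
   x^(a-1) is a positive multiple of the integral of t^(a-1) (x + t)^-1 over t > 0 (0 < a < 1),
   and u^* (A + t)^-1 u, being the maximum over v of 2 Re (v^* u) - v^* (A + t) v, is a maximum of
   affine functions of A and hence convex in A.  A positive map Phi preserves the resulting Loewner
   inequality between Z = Phi(C^p), C = (1 - s) A + s B, and M = (1 - s) Phi(A^p) + s Phi(B^p).
   For r = -1/p the function x^r is convex on (0, oo), decreasing if p > 0 and increasing if p < 0,
   so in either case every eigenvalue z_i of Z, with eigenvector u_i, satisfies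
   z_i^r <= (u_i^* M u_i)^r.  Finally u_i^* Phi(A^p) u_i is an average of the eigenvalues of Phi(A^p)
   with doubly stochastic weights, and convexity together with Jensen's inequality gives
   Tr Z^r <= (1 - s) Tr Phi(A^p)^r + s Tr Phi(B^p)^r. *)

section \<open>Adjoints, unitary matrices and quadratic forms\<close>

lemma sum_single_point:
  assumes "i < (n::nat)" "\<And>l. l < n \<Longrightarrow> l \<noteq> i \<Longrightarrow> g l = (0::'a::comm_monoid_add)"
  shows "(\<Sum>l<n. g l) = g i"
proof -
  have "(\<Sum>l<n. g l) = (\<Sum>l\<in>{i}. g l)"
    using assms by (intro sum.mono_neutral_right) auto
  then show ?thesis by simp
qed

lemma sum_two_points:
  assumes "i < (n::nat)" "j < n" "i \<noteq> j" "\<And>l. l \<noteq> i \<Longrightarrow> l \<noteq> j \<Longrightarrow> g l = (0::'a::comm_monoid_add)"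
  shows "(\<Sum>l<n. g l) = g i + g j"
proof -
  have "(\<Sum>l<n. g l) = (\<Sum>l\<in>{i,j}. g l)"
    using assms by (intro sum.mono_neutral_right) auto
  then show ?thesis using assms by simp
qed

lemma mat_adjoint_dim [simp]:
  "dim_row (mat_adjoint A) = dim_col A" "dim_col (mat_adjoint A) = dim_row A"
  unfolding mat_adjoint_def by auto

lemma mat_adjoint_index [simp]:
  "i < dim_col A \<Longrightarrow> j < dim_row A \<Longrightarrow> mat_adjoint A $$ (i,j) = cnj (A $$ (j,i))"
  unfolding mat_adjoint_def by (auto simp: mat_of_rows_def)

lemma mat_adjoint_carrier [simp]: "A \<in> carrier_mat n m \<Longrightarrow> mat_adjoint A \<in> carrier_mat m n"
  by auto

lemma mat_adjoint_mult_vec_carrier [simp]: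
  "U \<in> carrier_mat n m \<Longrightarrow> mat_adjoint U *\<^sub>v v \<in> carrier_vec m"
  by (intro carrier_vecI) auto

lemma mat_adjoint_adjoint [simp]: "mat_adjoint (mat_adjoint (A :: complex mat)) = A"
  by (rule eq_matI) auto

lemma mat_adjoint_mult:
  assumes "(A :: complex mat) \<in> carrier_mat n m" "B \<in> carrier_mat m l"
  shows "mat_adjoint (A * B) = mat_adjoint B * mat_adjoint A"
  using assms by (intro eq_matI) (auto simp: scalar_prod_def intro!: sum.cong)

lemma mult_carrier_mat_sq:
  "A \<in> carrier_mat n n \<Longrightarrow> B \<in> carrier_mat n n \<Longrightarrow> A * B \<in> carrier_mat n n"
  by (rule mult_carrier_mat)

lemma index_mult_mat_sum:
  assumes "(A :: complex mat) \<in> carrier_mat a b" "B \<in> carrier_mat b c" "i < a" "j < c"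
  shows "(A * B) $$ (i,j) = (\<Sum>l<b. A $$ (i,l) * B $$ (l,j))"
  using assms by (simp add: scalar_prod_def atLeast0LessThan)

lemma scalar_prod_mat_adjoint:
  assumes "(U :: complex mat) \<in> carrier_mat n m" "v \<in> carrier_vec n" "x \<in> carrier_vec m"
  shows "conjugate v \<bullet> (U *\<^sub>v x) = conjugate (mat_adjoint U *\<^sub>v v) \<bullet> x"
proof -
  have "conjugate v \<bullet> (U *\<^sub>v x) = (\<Sum>i<n. cnj (v$i) * (\<Sum>j<m. U$$(i,j) * x$j))"
    using assms by (simp add: scalar_prod_def mult_mat_vec_def atLeast0LessThan)
  also have "\<dots> = (\<Sum>j<m. (\<Sum>i<n. cnj (v$i) * U$$(i,j)) * x$j)"
    by (simp add: sum_distrib_left sum_distrib_right mult.assoc mult.left_commute) (rule sum.swap)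
  also have "\<dots> = conjugate (mat_adjoint U *\<^sub>v v) \<bullet> x"
    using assms by (simp add: scalar_prod_def mult_mat_vec_def atLeast0LessThan mult.commute)
  finally show ?thesis .
qed

lemma unitary_mat_carrier: "unitary_mat n U \<Longrightarrow> U \<in> carrier_mat n n"
  unfolding unitary_mat_def by auto

lemma unitary_mat_adjoint: "unitary_mat n U \<Longrightarrow> unitary_mat n (mat_adjoint U)"
  unfolding unitary_mat_def by auto

lemma unitary_adjoint_mult_cancel:
  assumes "unitary_mat n U" "X \<in> carrier_mat n m"
  shows "mat_adjoint U * (U * X) = X"
proof -
  have "mat_adjoint U * (U * X) = (mat_adjoint U * U) * X"
    using assms unitary_mat_carrier[OF assms(1)] by (simp add: assoc_mult_mat[of _ n n _ n _ m])
  then show ?thesis using assms unfolding unitary_mat_def by auto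
qed

lemma unitary_mult_adjoint_cancel:
  assumes "unitary_mat n U" "X \<in> carrier_mat n m"
  shows "U * (mat_adjoint U * X) = X"
  using unitary_adjoint_mult_cancel[OF unitary_mat_adjoint[OF assms(1)] assms(2)] by simp

lemma unitary_mult_adjoint_vec_cancel:
  assumes "unitary_mat n U" "v \<in> carrier_vec n"
  shows "U *\<^sub>v (mat_adjoint U *\<^sub>v v) = v" "mat_adjoint U *\<^sub>v (U *\<^sub>v v) = v"
  using assms unfolding unitary_mat_def
  by (simp_all add: assoc_mult_mat_vec[symmetric, of _ n n _ n])

lemma unitary_matI:
  assumes U: "U \<in> carrier_mat n n" and UU: "mat_adjoint U * U = 1\<^sub>m n"
  shows "unitary_mat n U"
  using mat_mult_left_right_inverse[OF mat_adjoint_carrier[OF U] U UU] U UU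
  unfolding unitary_mat_def by simp

lemma unitary_mat_mult:
  assumes U: "unitary_mat n U" and V: "unitary_mat n V"
  shows "unitary_mat n (U * V)"
proof -
  have Uc: "U \<in> carrier_mat n n" and Vc: "V \<in> carrier_mat n n"
    using U V unitary_mat_carrier by auto
  have "mat_adjoint (U * V) * (U * V) = mat_adjoint V * (mat_adjoint U * (U * V))"
    using Uc Vc by (simp add: mat_adjoint_mult[OF Uc Vc] assoc_mult_mat[of _ n n _ n _ n])
  also have "\<dots> = 1\<^sub>m n"
    using V Vc unitary_adjoint_mult_cancel[OF U Vc] unfolding unitary_mat_def by auto
  finally show ?thesis using Uc Vc by (intro unitary_matI) auto
qed

definition cvec_sq_norm :: "complex Matrix.vec \<Rightarrow> real" where
  "cvec_sq_norm v = (\<Sum>l<dim_vec v. (cmod (v $ l))^2)"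

lemma cvec_sq_norm_nonneg: "0 \<le> cvec_sq_norm v"
  unfolding cvec_sq_norm_def by (simp add: sum_nonneg)

lemma cvec_sq_norm_pos:
  assumes "v \<noteq> 0\<^sub>v (dim_vec v)"
  shows "0 < cvec_sq_norm v"
proof -
  obtain l where l: "l < dim_vec v" and "v $ l \<noteq> 0"
    using assms by (metis eq_vecI index_zero_vec)
  then have "0 < (cmod (v $ l))^2" by simp
  also have "\<dots> \<le> cvec_sq_norm v"
    unfolding cvec_sq_norm_def by (rule member_le_sum) (use l in simp_all)
  finally show ?thesis .
qed

lemma cvec_sq_norm_unit_vec: "i < n \<Longrightarrow> cvec_sq_norm (unit_vec n i) = 1"
  unfolding cvec_sq_norm_def by (subst sum_single_point[of i]) auto

lemma conjugate_scalar_prod_self: "conjugate v \<bullet> v = complex_of_real (cvec_sq_norm v)"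
  unfolding cvec_sq_norm_def of_real_sum complex_norm_square
  by (simp add: scalar_prod_def atLeast0LessThan mult.commute)

lemma cscalar_prod_self: "v \<bullet>c v = complex_of_real (cvec_sq_norm v)"
  unfolding cvec_sq_norm_def of_real_sum complex_norm_square
  by (simp add: scalar_prod_def atLeast0LessThan)

lemma unitary_scalar_prod:
  assumes U: "unitary_mat n U" and u: "u \<in> carrier_vec n" and v: "v \<in> carrier_vec n"
  shows "conjugate (mat_adjoint U *\<^sub>v v) \<bullet> (mat_adjoint U *\<^sub>v u) = conjugate v \<bullet> u"
proof -
  have Uc: "U \<in> carrier_mat n n" using U unitary_mat_carrier by auto
  have "conjugate v \<bullet> u = conjugate v \<bullet> (U *\<^sub>v (mat_adjoint U *\<^sub>v u))"
    by (simp only: unitary_mult_adjoint_vec_cancel[OF U u])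
  also have "\<dots> = conjugate (mat_adjoint U *\<^sub>v v) \<bullet> (mat_adjoint U *\<^sub>v u)"
    using Uc u v by (intro scalar_prod_mat_adjoint) auto
  finally show ?thesis by simp
qed

lemma unitary_cvec_sq_norm:
  assumes "unitary_mat n U" "v \<in> carrier_vec n"
  shows "cvec_sq_norm (mat_adjoint U *\<^sub>v v) = cvec_sq_norm v"
  using unitary_scalar_prod[OF assms(1,2,2)] by (simp add: conjugate_scalar_prod_self)

lemma unitary_col_sq_norm:
  assumes U: "unitary_mat n U" and j: "j < n"
  shows "(\<Sum>i<n. (cmod (U $$ (i,j)))^2) = 1"
proof -
  have Uc: "U \<in> carrier_mat n n" using U unitary_mat_carrier by blast
  have "complex_of_real (\<Sum>i<n. (cmod (U $$ (i,j)))^2) = (\<Sum>i<n. U $$ (i,j) * cnj (U $$ (i,j)))"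
    unfolding of_real_sum complex_norm_square ..
  also have "\<dots> = (mat_adjoint U * U) $$ (j,j)"
    using Uc j by (simp add: index_mult_mat_sum[OF mat_adjoint_carrier[OF Uc] Uc j j] mult.commute)
  also have "\<dots> = 1" using U j unfolding unitary_mat_def by simp
  finally show ?thesis by (simp only: of_real_eq_1_iff)
qed

lemma unitary_row_sq_norm:
  assumes U: "unitary_mat n U" and i: "i < n"
  shows "(\<Sum>j<n. (cmod (U $$ (i,j)))^2) = 1"
proof -
  have "(\<Sum>j<n. (cmod (U $$ (i,j)))^2) = (\<Sum>j<n. (cmod (mat_adjoint U $$ (j,i)))^2)"
    using unitary_mat_carrier[OF U] i by (intro sum.cong) auto
  then show ?thesis using unitary_col_sq_norm[OF unitary_mat_adjoint[OF U] i] by simp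
qed

lemma unitary_col_neq_zero:
  assumes "unitary_mat n U" "i < n"
  shows "col U i \<noteq> 0\<^sub>v n"
proof
  assume "col U i = 0\<^sub>v n"
  then have "U $$ (l,i) = 0" if "l < n" for l
    using that assms unitary_mat_carrier[OF assms(1)] by (metis carrier_matD index_col index_zero_vec(1))
  then show False using unitary_col_sq_norm[OF assms] by simp
qed

text \<open>For an eigenbasis \<open>U\<close> of a Hermitian matrix these are the masses of the spectral
  measure of \<open>u\<close>.\<close>

definition spectral_weight :: "complex mat \<Rightarrow> complex Matrix.vec \<Rightarrow> nat \<Rightarrow> real" where
  "spectral_weight U u j = (cmod ((mat_adjoint U *\<^sub>v u) $ j))^2"

lemma spectral_weight_nonneg: "0 \<le> spectral_weight U u j"
  unfolding spectral_weight_def by simp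

lemma sum_spectral_weight:
  assumes "unitary_mat n U" "u \<in> carrier_vec n"
  shows "(\<Sum>j<n. spectral_weight U u j) = cvec_sq_norm u"
  using unitary_cvec_sq_norm[OF assms] assms unitary_mat_carrier[OF assms(1)]
  by (simp add: spectral_weight_def cvec_sq_norm_def)

lemma real_diag_mat_carrier [simp]: "real_diag_mat n d \<in> carrier_mat n n"
  and real_diag_mat_dim [simp]: "dim_row (real_diag_mat n d) = n" "dim_col (real_diag_mat n d) = n"
  unfolding real_diag_mat_def by auto

lemma real_diag_mat_index [simp]:
  "i < n \<Longrightarrow> j < n \<Longrightarrow> real_diag_mat n d $$ (i,j) = (if i = j then complex_of_real (d i) else 0)"
  unfolding real_diag_mat_def by auto

lemma real_diag_mat_mult_vec_index:
  assumes "y \<in> carrier_vec n" "l < n"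
  shows "(real_diag_mat n d *\<^sub>v y) $ l = complex_of_real (d l) * y $ l"
proof -
  have "(real_diag_mat n d *\<^sub>v y) $ l = (\<Sum>m<n. real_diag_mat n d $$ (l,m) * y $ m)"
    using assms by (simp add: scalar_prod_def atLeast0LessThan)
  also have "\<dots> = real_diag_mat n d $$ (l,l) * y $ l"
    by (rule sum_single_point) (use assms in auto)
  finally show ?thesis using assms by simp
qed

lemma mult_real_diag_mat_index:
  assumes "X \<in> carrier_mat n n" "i < n" "j < n"
  shows "(X * real_diag_mat n d) $$ (i,j) = X $$ (i,j) * complex_of_real (d j)"
    and "(real_diag_mat n d * X) $$ (i,j) = complex_of_real (d i) * X $$ (i,j)"
proof -
  have "(X * real_diag_mat n d) $$ (i,j) = (\<Sum>l<n. X $$ (i,l) * real_diag_mat n d $$ (l,j))"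
    using assms by (intro index_mult_mat_sum) auto
  also have "\<dots> = X $$ (i,j) * real_diag_mat n d $$ (j,j)"
    by (rule sum_single_point) (use assms in auto)
  finally show "(X * real_diag_mat n d) $$ (i,j) = X $$ (i,j) * complex_of_real (d j)"
    using assms by simp
  have "(real_diag_mat n d * X) $$ (i,j) = (\<Sum>l<n. real_diag_mat n d $$ (i,l) * X $$ (l,j))"
    using assms by (intro index_mult_mat_sum) auto
  also have "\<dots> = real_diag_mat n d $$ (i,i) * X $$ (i,j)"
    by (rule sum_single_point) (use assms in auto)
  finally show "(real_diag_mat n d * X) $$ (i,j) = complex_of_real (d i) * X $$ (i,j)"
    using assms by simp
qed

lemma quad_form_diag:
  assumes U: "(U :: complex mat) \<in> carrier_mat n n" and v: "v \<in> carrier_vec n"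
  shows "quad_form (U * real_diag_mat n d * mat_adjoint U) v
    = complex_of_real (\<Sum>j<n. d j * spectral_weight U v j)"
proof -
  define y where "y = mat_adjoint U *\<^sub>v v"
  have y: "y \<in> carrier_vec n" using U v unfolding y_def by auto
  have "quad_form (U * real_diag_mat n d * mat_adjoint U) v
      = conjugate v \<bullet> (U *\<^sub>v (real_diag_mat n d *\<^sub>v y))"
    unfolding quad_form_def y_def using U v by (simp add: assoc_mult_mat_vec[of _ n n _ n])
  also have "\<dots> = conjugate y \<bullet> (real_diag_mat n d *\<^sub>v y)"
    using scalar_prod_mat_adjoint[OF U v mult_mat_vec_carrier[OF real_diag_mat_carrier y]]
    unfolding y_def .
  also have "\<dots> = (\<Sum>j<n. complex_of_real (d j) * (y $ j * cnj (y $ j)))"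
    unfolding scalar_prod_def using y
    by (intro sum.cong) (auto simp: real_diag_mat_mult_vec_index[OF y] simp del: index_mult_mat_vec)
  also have "\<dots> = complex_of_real (\<Sum>j<n. d j * spectral_weight U v j)"
    unfolding spectral_weight_def y_def[symmetric] of_real_sum of_real_mult complex_norm_square ..
  finally show ?thesis .
qed

lemma trace_mat_diag:
  assumes U: "unitary_mat n U"
  shows "trace_mat (U * real_diag_mat n d * mat_adjoint U) = complex_of_real (\<Sum>j<n. d j)"
proof -
  have Uc: "U \<in> carrier_mat n n" using U unitary_mat_carrier by blast
  have entry: "(U * real_diag_mat n d * mat_adjoint U) $$ (i,i)
      = complex_of_real (\<Sum>j<n. d j * (cmod (U $$ (i,j)))^2)" if i: "i < n" for i
  proof -
    have "(U * real_diag_mat n d * mat_adjoint U) $$ (i,i)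
        = (\<Sum>j<n. (U * real_diag_mat n d) $$ (i,j) * mat_adjoint U $$ (j,i))"
      by (rule index_mult_mat_sum) (use Uc i in auto)
    also have "\<dots> = (\<Sum>j<n. complex_of_real (d j) * (U $$ (i,j) * cnj (U $$ (i,j))))"
      using Uc i by (intro sum.cong) (auto simp: mult_real_diag_mat_index simp del: index_mult_mat)
    also have "\<dots> = complex_of_real (\<Sum>j<n. d j * (cmod (U $$ (i,j)))^2)"
      unfolding of_real_sum of_real_mult complex_norm_square ..
    finally show ?thesis .
  qed
  have "trace_mat (U * real_diag_mat n d * mat_adjoint U)
      = complex_of_real (\<Sum>i<n. \<Sum>j<n. d j * (cmod (U $$ (i,j)))^2)"
    unfolding trace_mat_def of_real_sum using Uc entry by simp
  also have "\<dots> = complex_of_real (\<Sum>j<n. d j * (\<Sum>i<n. (cmod (U $$ (i,j)))^2))"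
    by (simp only: sum_distrib_left) (subst sum.swap, rule refl)
  also have "\<dots> = complex_of_real (\<Sum>j<n. d j)"
    using unitary_col_sq_norm[OF U] by simp
  finally show ?thesis .
qed

lemma quad_form_add:
  assumes "(A :: complex mat) \<in> carrier_mat n n" "B \<in> carrier_mat n n" "v \<in> carrier_vec n"
  shows "quad_form (A + B) v = quad_form A v + quad_form B v"
  using assms by (simp add: quad_form_def add_mult_distrib_mat_vec scalar_prod_add_distrib[of _ n])

lemma quad_form_smult:
  assumes "(A :: complex mat) \<in> carrier_mat n n" "v \<in> carrier_vec n"
  shows "quad_form (c \<cdot>\<^sub>m A) v = c * quad_form A v"
proof -
  have "(c \<cdot>\<^sub>m A) *\<^sub>v v = c \<cdot>\<^sub>v (A *\<^sub>v v)"
    using assms by (intro eq_vecI) (auto simp: scalar_prod_def sum_distrib_left mult.assoc)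
  then show ?thesis using assms by (simp add: quad_form_def)
qed

lemma quad_form_minus:
  assumes "(A :: complex mat) \<in> carrier_mat n n" "B \<in> carrier_mat n n" "v \<in> carrier_vec n"
  shows "quad_form (A - B) v = quad_form A v - quad_form B v"
  using assms by (simp add: quad_form_def minus_mult_distrib_mat_vec scalar_prod_minus_distrib[of _ n])

lemma quad_form_lincomb:
  assumes "(A :: complex mat) \<in> carrier_mat n n" "B \<in> carrier_mat n n" "v \<in> carrier_vec n"
  shows "quad_form (c \<cdot>\<^sub>m A + d \<cdot>\<^sub>m B) v = c * quad_form A v + d * quad_form B v"
  using assms by (simp add: quad_form_add[of _ n] quad_form_smult[of _ n])

lemma quad_form_one: "v \<in> carrier_vec n \<Longrightarrow> quad_form (1\<^sub>m n) v = complex_of_real (cvec_sq_norm v)"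
  by (simp add: quad_form_def conjugate_scalar_prod_self)

section \<open>The spectral theorem for Hermitian matrices\<close>

definition hermitian_mat :: "nat \<Rightarrow> complex mat \<Rightarrow> bool" where
  "hermitian_mat n A \<longleftrightarrow> A \<in> carrier_mat n n \<and> mat_adjoint A = A"

lemma hermitian_matD:
  assumes "hermitian_mat n A" "i < n" "j < n"
  shows "A $$ (i,j) = cnj (A $$ (j,i))"
proof -
  have "mat_adjoint A $$ (i,j) = cnj (A $$ (j,i))"
    using assms unfolding hermitian_mat_def by (intro mat_adjoint_index) auto
  then show ?thesis using assms unfolding hermitian_mat_def by simp
qed

lemma hermitian_matI:
  assumes "A \<in> carrier_mat n n" "\<And>i j. i < n \<Longrightarrow> j < n \<Longrightarrow> A $$ (i,j) = cnj (A $$ (j,i))"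
  shows "hermitian_mat n A"
  unfolding hermitian_mat_def
proof (intro conjI assms(1) eq_matI)
  fix i j assume "i < dim_row A" "j < dim_col A"
  then have ij: "i < n" "j < n" using assms(1) by auto
  have "A $$ (j,i) = cnj (A $$ (i,j))" using assms(2)[OF ij(2,1)] .
  then show "mat_adjoint A $$ (i,j) = A $$ (i,j)" using ij assms(1) by simp
qed (use assms(1) in auto)

lemma quad_form_double_sum:
  assumes "(A :: complex mat) \<in> carrier_mat n n" "v \<in> carrier_vec n"
  shows "quad_form A v = (\<Sum>i<n. \<Sum>j<n. cnj (v$i) * A$$(i,j) * v$j)"
  using assms by (simp add: quad_form_def scalar_prod_def mult_mat_vec_def atLeast0LessThan
      sum_distrib_left mult.assoc)

lemma quad_form_two_points:
  assumes A: "(A :: complex mat) \<in> carrier_mat n n" and ij: "i < n" "j < n" "i \<noteq> j"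
  shows "quad_form A (Matrix.vec n (\<lambda>l. if l = i then 1 else if l = j then c else 0))
    = A$$(i,i) + c * A$$(i,j) + cnj c * A$$(j,i) + cnj c * c * A$$(j,j)"
proof -
  let ?f = "\<lambda>l. if l = i then 1 else if l = j then c else (0::complex)"
  have "quad_form A (Matrix.vec n ?f) = (\<Sum>a<n. \<Sum>b<n. cnj (?f a) * A$$(a,b) * ?f b)"
    by (subst quad_form_double_sum[OF A]) auto
  also have "\<dots> = (\<Sum>b<n. cnj (?f i) * A$$(i,b) * ?f b) + (\<Sum>b<n. cnj (?f j) * A$$(j,b) * ?f b)"
    by (rule sum_two_points[OF ij]) auto
  also have "(\<Sum>b<n. cnj (?f i) * A$$(i,b) * ?f b) = cnj (?f i) * A$$(i,i) * ?f i + cnj (?f i) * A$$(i,j) * ?f j"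
    by (rule sum_two_points[OF ij]) auto
  also have "(\<Sum>b<n. cnj (?f j) * A$$(j,b) * ?f b) = cnj (?f j) * A$$(j,i) * ?f i + cnj (?f j) * A$$(j,j) * ?f j"
    by (rule sum_two_points[OF ij]) auto
  finally show ?thesis using ij by (simp add: algebra_simps)
qed

lemma quad_form_unit_vec:
  assumes A: "(A :: complex mat) \<in> carrier_mat n n" and i: "i < n"
  shows "quad_form A (unit_vec n i) = A$$(i,i)"
proof -
  have "quad_form A (unit_vec n i) = (\<Sum>a<n. \<Sum>b<n. cnj (unit_vec n i $ a) * A$$(a,b) * unit_vec n i $ b)"
    by (rule quad_form_double_sum[OF A]) simp
  also have "\<dots> = (\<Sum>b<n. cnj (unit_vec n i $ i) * A$$(i,b) * unit_vec n i $ b)"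
    by (rule sum_single_point[OF i]) (use i in simp)
  also have "\<dots> = cnj (unit_vec n i $ i) * A$$(i,i) * unit_vec n i $ i"
    by (rule sum_single_point[OF i]) (use i in simp)
  finally show ?thesis using i by simp
qed

text \<open>Polarization: the quadratic form at \<open>e\<^sub>i + e\<^sub>j\<close> and \<open>e\<^sub>i + \<i> e\<^sub>j\<close> determines the
  imaginary part of \<open>A\<^sub>i\<^sub>j + A\<^sub>j\<^sub>i\<close> and the real part of \<open>A\<^sub>i\<^sub>j - A\<^sub>j\<^sub>i\<close>.\<close>

lemma hermitian_if_real_quad_form:
  assumes A: "(A :: complex mat) \<in> carrier_mat n n"
    and real: "\<And>v. v \<in> carrier_vec n \<Longrightarrow> Im (quad_form A v) = 0"
  shows "hermitian_mat n A"
proof (rule hermitian_matI[OF A])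
  fix i j assume i: "i < n" and j: "j < n"
  have diag: "Im (A$$(l,l)) = 0" if "l < n" for l
    using real[of "unit_vec n l"] quad_form_unit_vec[OF A that] that by simp
  show "A$$(i,j) = cnj (A$$(j,i))"
  proof (cases "i = j")
    case True then show ?thesis using diag[OF i] by (simp add: complex_eq_iff)
  next
    case False
    have "Im (A$$(i,j) + A$$(j,i)) = 0"
      using real[of "Matrix.vec n (\<lambda>l. if l = i then 1 else if l = j then 1 else 0)"]
        quad_form_two_points[OF A i j False, of 1] diag[OF i] diag[OF j] by simp
    moreover have "Re (A$$(i,j)) - Re (A$$(j,i)) = 0"
      using real[of "Matrix.vec n (\<lambda>l. if l = i then 1 else if l = j then \<i> else 0)"]
        quad_form_two_points[OF A i j False, of \<i>] diag[OF i] diag[OF j] by simp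
    ultimately show ?thesis by (simp add: complex_eq_iff)
  qed
qed

lemma pd_mat_hermitian: "pd_mat n A \<Longrightarrow> hermitian_mat n A"
proof -
  assume pd: "pd_mat n A"
  then have A: "A \<in> carrier_mat n n" unfolding pd_mat_def by auto
  show ?thesis
  proof (rule hermitian_if_real_quad_form[OF A])
    fix v :: "complex Matrix.vec" assume v: "v \<in> carrier_vec n"
    show "Im (quad_form A v) = 0"
    proof (cases "v = 0\<^sub>v n")
      case True then show ?thesis using A by (simp add: quad_form_def)
    next
      case False then show ?thesis using pd v unfolding pd_mat_def by auto
    qed
  qed
qed

lemma pd_mat_carrier: "pd_mat n A \<Longrightarrow> A \<in> carrier_mat n n"
  unfolding pd_mat_def by simp

lemma hermitian_mat_unitary_conj:
  assumes "hermitian_mat n A" "unitary_mat n W"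
  shows "hermitian_mat n (mat_adjoint W * A * W)"
proof -
  have A: "A \<in> carrier_mat n n" and W: "W \<in> carrier_mat n n" and hA: "mat_adjoint A = A"
    using assms unitary_mat_carrier unfolding hermitian_mat_def by auto
  have "mat_adjoint (mat_adjoint W * A * W) = mat_adjoint W * mat_adjoint A * W"
    using A W by (simp add: mat_adjoint_mult[of _ n n _ n] assoc_mult_mat[of _ n n _ n _ n])
  moreover have "mat_adjoint W * A * W \<in> carrier_mat n n"
    using A W by (meson mat_adjoint_carrier mult_carrier_mat)
  ultimately show ?thesis using hA unfolding hermitian_mat_def by simp
qed

lemma unitary_conj_cancel:
  assumes W: "unitary_mat n W" and A: "A \<in> carrier_mat n n"
  shows "W * (mat_adjoint W * A * W) * mat_adjoint W = A"
proof -
  have Wc: "W \<in> carrier_mat n n" using W unitary_mat_carrier by blast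
  have Wa: "mat_adjoint W \<in> carrier_mat n n" using Wc by simp
  have WA: "mat_adjoint W * A \<in> carrier_mat n n" using Wa A by (rule mult_carrier_mat)
  have "W * (mat_adjoint W * A * W) * mat_adjoint W = W * ((mat_adjoint W * A) * (W * mat_adjoint W))"
    using Wc Wa WA by (simp add: assoc_mult_mat[of _ n n _ n _ n])
  also have "\<dots> = A"
    using W A WA unitary_mult_adjoint_cancel[OF W A] unfolding unitary_mat_def by simp
  finally show ?thesis .
qed

lemma corthogonal_sq_norm_pos:
  assumes "corthogonal ws" "j < length ws"
  shows "0 < cvec_sq_norm (ws ! j)"
proof -
  have "ws ! j \<bullet>c ws ! j \<noteq> 0" using assms unfolding corthogonal_def by blast
  then have "cvec_sq_norm (ws ! j) \<noteq> 0" by (simp add: cscalar_prod_self)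
  then show ?thesis using cvec_sq_norm_nonneg[of "ws ! j"] by linarith
qed

lemma unitary_mat_of_corthogonal:
  assumes ws: "set ws \<subseteq> carrier_vec n" "corthogonal ws" "length ws = n"
  defines "W \<equiv> Matrix.mat n n (\<lambda>(i,j). (ws!j)$i / complex_of_real (sqrt (cvec_sq_norm (ws!j))))"
  shows "unitary_mat n W"
proof -
  define nr where "nr j = sqrt (cvec_sq_norm (ws!j))" for j
  have wsc: "ws ! j \<in> carrier_vec n" if "j < n" for j using ws that by auto
  have nr_pos: "nr j > 0" if "j < n" for j
    using corthogonal_sq_norm_pos[OF ws(2)] ws(3) that unfolding nr_def by simp
  have Wc: "W \<in> carrier_mat n n" unfolding W_def by simp
  have Wij: "W $$ (l,j) = (ws!j)$l / complex_of_real (nr j)" if "l < n" "j < n" for l j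
    using that unfolding W_def nr_def by simp
  have "mat_adjoint W * W = 1\<^sub>m n"
  proof (rule eq_matI)
    fix i j assume "i < dim_row (1\<^sub>m n)" "j < dim_col (1\<^sub>m n)"
    then have i: "i < n" and j: "j < n" by simp_all
    have "(mat_adjoint W * W) $$ (i,j) = (\<Sum>l<n. mat_adjoint W $$ (i,l) * W $$ (l,j))"
      by (rule index_mult_mat_sum) (use Wc i j in auto)
    also have "\<dots> = (\<Sum>l<n. (ws!j)$l * cnj ((ws!i)$l)) / complex_of_real (nr i * nr j)"
      unfolding sum_divide_distrib using Wc i j nr_pos[OF i] nr_pos[OF j]
      by (intro sum.cong) (auto simp: Wij)
    also have "(\<Sum>l<n. (ws!j)$l * cnj ((ws!i)$l)) = ws!j \<bullet>c ws!i"
      using wsc[OF i] wsc[OF j] by (simp add: scalar_prod_def atLeast0LessThan)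
    also have "(ws!j \<bullet>c ws!i) / complex_of_real (nr i * nr j) = 1\<^sub>m n $$ (i,j)"
    proof (cases "i = j")
      case True
      have "ws!j \<bullet>c ws!j = complex_of_real ((nr j)^2)"
        unfolding cscalar_prod_self nr_def using cvec_sq_norm_nonneg by simp
      then show ?thesis using True nr_pos[OF j] i by (simp add: power2_eq_square)
    next
      case False
      then have "ws ! j \<bullet>c ws ! i = 0" using ws(2,3) i j unfolding corthogonal_def by blast
      then show ?thesis using False i j by simp
    qed
    finally show "(mat_adjoint W * W) $$ (i,j) = 1\<^sub>m n $$ (i,j)" .
  qed (use Wc in simp_all)
  then show ?thesis by (rule unitary_matI[OF Wc])
qed

lemma unitary_mat_with_first_col:
  assumes v: "v \<in> carrier_vec n" and v0: "v \<noteq> 0\<^sub>v n"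
  shows "\<exists>W c. unitary_mat n W \<and> 0 < c \<and> (\<forall>i<n. W $$ (i,0) = v $ i / complex_of_real c)"
proof -
  interpret cof_vec_space n "TYPE(complex)" .
  define b where "b = basis_completion v"
  from basis_completion[OF v v0, folded b_def]
  have dist_b: "distinct b" and indep: "\<not> lin_dep (set b)" and b: "set b \<subseteq> carrier_vec n"
    and hdb: "hd b = v" and len_b: "length b = n" by auto
  define ws where "ws = gram_schmidt n b"
  from gram_schmidt_result[OF b dist_b indep refl, folded ws_def]
  have ws: "set ws \<subseteq> carrier_vec n" "corthogonal ws" "length ws = n" by (auto simp: len_b)
  have "n \<noteq> 0" using v v0 by auto
  then obtain vs where "b = v # vs" using hdb len_b by (cases b) auto
  then have "hd ws = v" unfolding ws_def using gram_schmidt_hd[OF v] by simp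
  then have ws0: "ws ! 0 = v" using ws(3) \<open>n \<noteq> 0\<close> by (cases ws) auto
  have "0 < cvec_sq_norm v" using cvec_sq_norm_pos v v0 by auto
  then show ?thesis
    using unitary_mat_of_corthogonal[OF ws] \<open>n \<noteq> 0\<close> ws0
    by (intro exI[of _ "sqrt (cvec_sq_norm v)"] exI conjI) auto
qed

lemma unitary_conj_eigenvector_col:
  assumes A: "A \<in> carrier_mat n n" and W: "unitary_mat n W" and c: "0 < c"
    and W0: "\<forall>l<n. W $$ (l,0) = v $ l / complex_of_real c"
    and v: "v \<in> carrier_vec n" and Av: "A *\<^sub>v v = e \<cdot>\<^sub>v v" and i: "i < n"
  shows "(mat_adjoint W * A * W) $$ (i,0) = (if i = 0 then e else 0)"
proof -
  have Wc: "W \<in> carrier_mat n n" using W unitary_mat_carrier by blast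
  have n: "0 < n" using i by simp
  have AW: "(A * W) $$ (l,0) = e * W $$ (l,0)" if l: "l < n" for l
  proof -
    have "(A * W) $$ (l,0) = (\<Sum>k<n. A $$ (l,k) * v $ k) / complex_of_real c"
      using W0 by (simp add: index_mult_mat_sum[OF A Wc l n] sum_divide_distrib)
    also have "(\<Sum>k<n. A $$ (l,k) * v $ k) = (A *\<^sub>v v) $ l"
      using A v l by (simp add: scalar_prod_def atLeast0LessThan)
    finally show ?thesis using Av l v W0 by simp
  qed
  have "(mat_adjoint W * A * W) $$ (i,0) = (mat_adjoint W * (A * W)) $$ (i,0)"
    using A Wc by (simp only: assoc_mult_mat[of _ n n _ n _ n] mat_adjoint_carrier)
  also have "\<dots> = (\<Sum>l<n. mat_adjoint W $$ (i,l) * (A * W) $$ (l,0))"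
    using A Wc i n by (intro index_mult_mat_sum) auto
  also have "\<dots> = e * (\<Sum>l<n. mat_adjoint W $$ (i,l) * W $$ (l,0))"
    using AW by (simp add: sum_distrib_left mult.left_commute)
  also have "(\<Sum>l<n. mat_adjoint W $$ (i,l) * W $$ (l,0)) = (mat_adjoint W * W) $$ (i,0)"
    using Wc i n by (intro index_mult_mat_sum[symmetric]) auto
  finally show ?thesis using W i n unfolding unitary_mat_def by simp
qed

definition scalar_block_mat :: "nat \<Rightarrow> complex \<Rightarrow> complex mat \<Rightarrow> complex mat" where
  "scalar_block_mat m c X = Matrix.mat (Suc m) (Suc m)
     (\<lambda>(i,j). if i = 0 \<and> j = 0 then c else if i = 0 \<or> j = 0 then 0 else X $$ (i - 1, j - 1))"

lemma scalar_block_mat_carrier [simp]: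
  "scalar_block_mat m c X \<in> carrier_mat (Suc m) (Suc m)"
  "dim_row (scalar_block_mat m c X) = Suc m" "dim_col (scalar_block_mat m c X) = Suc m"
  unfolding scalar_block_mat_def by simp_all

lemma scalar_block_mat_index:
  "i < Suc m \<Longrightarrow> j < Suc m \<Longrightarrow> scalar_block_mat m c X $$ (i,j)
    = (if i = 0 \<and> j = 0 then c else if i = 0 \<or> j = 0 then 0 else X $$ (i - 1, j - 1))"
  unfolding scalar_block_mat_def by simp

lemma scalar_block_mat_mult:
  assumes X: "X \<in> carrier_mat m m" and Y: "Y \<in> carrier_mat m m"
  shows "scalar_block_mat m c X * scalar_block_mat m c' Y = scalar_block_mat m (c * c') (X * Y)"
proof (rule eq_matI)
  fix i j assume "i < dim_row (scalar_block_mat m (c * c') (X * Y))"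
    and "j < dim_col (scalar_block_mat m (c * c') (X * Y))"
  then have i: "i < Suc m" and j: "j < Suc m" by simp_all
  have "(scalar_block_mat m c X * scalar_block_mat m c' Y) $$ (i,j)
      = (\<Sum>l<Suc m. scalar_block_mat m c X $$ (i,l) * scalar_block_mat m c' Y $$ (l,j))"
    by (rule index_mult_mat_sum[OF scalar_block_mat_carrier(1) scalar_block_mat_carrier(1) i j])
  also have "\<dots> = scalar_block_mat m c X $$ (i,0) * scalar_block_mat m c' Y $$ (0,j)
        + (\<Sum>l<m. scalar_block_mat m c X $$ (i, Suc l) * scalar_block_mat m c' Y $$ (Suc l, j))"
    by (rule sum.lessThan_Suc_shift)
  also have "\<dots> = scalar_block_mat m (c * c') (X * Y) $$ (i,j)"
    using i j X Y
    by (cases i; cases j) (simp_all add: scalar_block_mat_index index_mult_mat_sum[OF X Y] del: index_mult_mat)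
  finally show "(scalar_block_mat m c X * scalar_block_mat m c' Y) $$ (i,j)
      = scalar_block_mat m (c * c') (X * Y) $$ (i,j)" .
qed simp_all

lemma scalar_block_mat_adjoint:
  "X \<in> carrier_mat m m \<Longrightarrow> mat_adjoint (scalar_block_mat m c X) = scalar_block_mat m (cnj c) (mat_adjoint X)"
  by (intro eq_matI) (simp_all add: scalar_block_mat_index)

lemma scalar_block_mat_one: "scalar_block_mat m 1 (1\<^sub>m m) = 1\<^sub>m (Suc m)"
  by (intro eq_matI) (auto simp: scalar_block_mat_index)

lemma scalar_block_mat_real_diag:
  "scalar_block_mat m (complex_of_real r) (real_diag_mat m d)
    = real_diag_mat (Suc m) (\<lambda>i. if i = 0 then r else d (i - 1))"
  by (intro eq_matI) (auto simp: scalar_block_mat_index)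

lemma scalar_block_mat_unitary:
  assumes V: "unitary_mat m V"
  shows "unitary_mat (Suc m) (scalar_block_mat m 1 V)"
proof -
  have Vc: "V \<in> carrier_mat m m" using V unitary_mat_carrier by blast
  then have Va: "mat_adjoint V \<in> carrier_mat m m" by simp
  show ?thesis
    using V unfolding unitary_mat_def
    by (simp add: scalar_block_mat_adjoint[OF Vc] scalar_block_mat_mult[OF Va Vc]
        scalar_block_mat_mult[OF Vc Va] scalar_block_mat_one)
qed

lemma hermitian_first_col_block:
  assumes B: "hermitian_mat (Suc m) B" and col: "\<forall>i<Suc m. B $$ (i,0) = (if i = 0 then e else 0)"
  defines "B' \<equiv> Matrix.mat m m (\<lambda>(i,j). B $$ (Suc i, Suc j))"
  shows "hermitian_mat m B'" "B = scalar_block_mat m (complex_of_real (Re e)) B'"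
proof -
  have Bc: "B \<in> carrier_mat (Suc m) (Suc m)" using B unfolding hermitian_mat_def by simp
  show "hermitian_mat m B'"
    unfolding B'_def by (rule hermitian_matI) (auto intro: hermitian_matD[OF B])
  have "cnj e = e" using hermitian_matD[OF B, of 0 0] col by simp
  then have e: "complex_of_real (Re e) = e" by (simp add: complex_eq_iff)
  show "B = scalar_block_mat m (complex_of_real (Re e)) B'"
  proof (rule eq_matI)
    fix i j assume "i < dim_row (scalar_block_mat m (complex_of_real (Re e)) B')"
      and "j < dim_col (scalar_block_mat m (complex_of_real (Re e)) B')"
    then have i: "i < Suc m" and j: "j < Suc m" by simp_all
    show "B $$ (i,j) = scalar_block_mat m (complex_of_real (Re e)) B' $$ (i,j)"
      using col i j e hermitian_matD[OF B i j] hermitian_matD[OF B j i]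
      by (cases i; cases j) (simp_all add: scalar_block_mat_index B'_def)
  qed (use Bc in simp_all)
qed

lemma hermitian_deflation:
  assumes A: "hermitian_mat (Suc m) A"
  shows "\<exists>W e A'. unitary_mat (Suc m) W \<and> hermitian_mat m A'
    \<and> mat_adjoint W * A * W = scalar_block_mat m (complex_of_real e) A'"
proof -
  have Ac: "A \<in> carrier_mat (Suc m) (Suc m)" using A unfolding hermitian_mat_def by simp
  obtain e where "eigenvalue A e"
    using spectrum_non_empty[OF Ac] unfolding spectrum_def by auto
  then obtain v where "eigenvector A v e" unfolding eigenvalue_def by blast
  then have v: "v \<in> carrier_vec (Suc m)" and v0: "v \<noteq> 0\<^sub>v (Suc m)" and Av: "A *\<^sub>v v = e \<cdot>\<^sub>v v"
    using Ac unfolding eigenvector_def by simp_all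
  obtain W c where W: "unitary_mat (Suc m) W" and c: "0 < c"
    and W0: "\<forall>i<Suc m. W $$ (i,0) = v $ i / complex_of_real c"
    using unitary_mat_with_first_col[OF v v0] by blast
  have "\<forall>i<Suc m. (mat_adjoint W * A * W) $$ (i,0) = (if i = 0 then e else 0)"
    using unitary_conj_eigenvector_col[OF Ac W c W0 v Av] by blast
  from hermitian_first_col_block[OF hermitian_mat_unitary_conj[OF A W] this]
  show ?thesis using W by blast
qed

theorem hermitian_spectral_decomposition:
  "hermitian_mat n A \<Longrightarrow> \<exists>U d. unitary_mat n U \<and> A = U * real_diag_mat n d * mat_adjoint U"
proof (induction n arbitrary: A)
  case 0
  then have "A \<in> carrier_mat 0 0" unfolding hermitian_mat_def by simp
  then have "A = 1\<^sub>m 0 * real_diag_mat 0 (\<lambda>_. 0) * mat_adjoint (1\<^sub>m 0)"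
    by (intro eq_matI) auto
  moreover have "unitary_mat 0 (1\<^sub>m 0)"
    unfolding unitary_mat_def by (auto intro: eq_matI)
  ultimately show ?case by blast
next
  case (Suc m)
  obtain W e A' where W: "unitary_mat (Suc m) W" and A': "hermitian_mat m A'"
    and WAW: "mat_adjoint W * A * W = scalar_block_mat m (complex_of_real e) A'"
    using hermitian_deflation[OF Suc.prems] by blast
  obtain V d' where V: "unitary_mat m V" and A'd: "A' = V * real_diag_mat m d' * mat_adjoint V"
    using Suc.IH[OF A'] by blast
  have Ac: "A \<in> carrier_mat (Suc m) (Suc m)" using Suc.prems unfolding hermitian_mat_def by simp
  have Vc: "V \<in> carrier_mat m m" and Wc: "W \<in> carrier_mat (Suc m) (Suc m)"
    using V W unitary_mat_carrier by auto
  define E where "E = scalar_block_mat m 1 V"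
  define d where "d = (\<lambda>i. if i = 0 then e else d' (i - 1))"
  have E: "unitary_mat (Suc m) E" unfolding E_def by (rule scalar_block_mat_unitary[OF V])
  have Ec: "E \<in> carrier_mat (Suc m) (Suc m)" unfolding E_def by simp
  have "E * real_diag_mat (Suc m) d * mat_adjoint E = scalar_block_mat m (complex_of_real e) A'"
    unfolding E_def d_def A'd scalar_block_mat_real_diag[symmetric] scalar_block_mat_adjoint[OF Vc]
    using Vc by (simp add: scalar_block_mat_mult)
  then have "A = W * (E * real_diag_mat (Suc m) d * mat_adjoint E) * mat_adjoint W"
    using unitary_conj_cancel[OF W Ac] WAW by simp
  also have "\<dots> = (W * E) * real_diag_mat (Suc m) d * mat_adjoint (W * E)"
    using Wc Ec by (simp add: mat_adjoint_mult[OF Wc Ec] assoc_mult_mat[of _ "Suc m" "Suc m" _ "Suc m" _ "Suc m"]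
        mult_carrier_mat_sq)
  finally show ?case using unitary_mat_mult[OF W E] by blast
qed

section \<open>Real powers of positive definite matrices\<close>

lemma diag_intertwining_fun:
  assumes W: "W \<in> carrier_mat n n" and WD: "W * real_diag_mat n d = real_diag_mat n e * W"
  shows "W * real_diag_mat n (\<lambda>i. f (d i)) = real_diag_mat n (\<lambda>i. f (e i)) * W"
proof (rule eq_matI)
  fix i j assume "i < dim_row (real_diag_mat n (\<lambda>i. f (e i)) * W)"
    and "j < dim_col (real_diag_mat n (\<lambda>i. f (e i)) * W)"
  then have i: "i < n" and j: "j < n" using W by simp_all
  have "W $$ (i,j) * complex_of_real (d j) = complex_of_real (e i) * W $$ (i,j)"
    using arg_cong[OF WD, of "\<lambda>M. M $$ (i,j)"] mult_real_diag_mat_index[OF W i j] by simp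
  then have "W $$ (i,j) = 0 \<or> d j = e i" by (simp add: mult.commute)
  then show "(W * real_diag_mat n (\<lambda>i. f (d i))) $$ (i,j) = (real_diag_mat n (\<lambda>i. f (e i)) * W) $$ (i,j)"
    using mult_real_diag_mat_index[OF W i j] by auto
qed (use W in simp_all)

text \<open>This makes the definite description in \<^const>\<open>mat_rpow\<close> well defined.\<close>

lemma unitary_diag_fun_unique:
  assumes U: "unitary_mat n U" and V: "unitary_mat n V"
    and H: "U * real_diag_mat n d * mat_adjoint U = V * real_diag_mat n e * mat_adjoint V"
  shows "U * real_diag_mat n (\<lambda>i. f (d i)) * mat_adjoint U
    = V * real_diag_mat n (\<lambda>i. f (e i)) * mat_adjoint V"
proof -
  have Uc: "U \<in> carrier_mat n n" and Vc: "V \<in> carrier_mat n n"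
    using U V unitary_mat_carrier by auto
  define W where "W = mat_adjoint V * U"
  have Wc: "W \<in> carrier_mat n n" unfolding W_def using Uc Vc by (simp add: mult_carrier_mat_sq)
  note simps = assoc_mult_mat[of _ n n _ n _ n] mult_carrier_mat_sq Uc Vc
    unitary_adjoint_mult_cancel[OF U, of _ n] unitary_adjoint_mult_cancel[OF V, of _ n]
    unitary_mult_adjoint_cancel[OF U, of _ n] unitary_mult_adjoint_cancel[OF V, of _ n]
    right_mult_one_mat[OF mat_adjoint_carrier[OF Vc]]
  have UU: "mat_adjoint U * U = 1\<^sub>m n" "U * mat_adjoint U = 1\<^sub>m n"
    using U unfolding unitary_mat_def by simp_all
  have "mat_adjoint V * (U * real_diag_mat n d * mat_adjoint U) * U
      = mat_adjoint V * (V * real_diag_mat n e * mat_adjoint V) * U"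
    using H by simp
  then have "W * real_diag_mat n d = real_diag_mat n e * W"
    unfolding W_def using Uc by (simp add: simps UU)
  then have WF: "W * real_diag_mat n (\<lambda>i. f (d i)) = real_diag_mat n (\<lambda>i. f (e i)) * W"
    by (rule diag_intertwining_fun[OF Wc])
  have "U * real_diag_mat n (\<lambda>i. f (d i)) * mat_adjoint U
      = V * ((W * real_diag_mat n (\<lambda>i. f (d i))) * mat_adjoint U)"
    unfolding W_def by (simp add: simps)
  also have "\<dots> = V * real_diag_mat n (\<lambda>i. f (e i)) * mat_adjoint V"
    unfolding WF unfolding W_def using Uc by (simp add: simps UU)
  finally show ?thesis .
qed

definition pos_diag_decomp :: "nat \<Rightarrow> complex mat \<Rightarrow> complex mat \<Rightarrow> (nat \<Rightarrow> real) \<Rightarrow> bool" where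
  "pos_diag_decomp n A U d \<longleftrightarrow>
     unitary_mat n U \<and> (\<forall>i<n. 0 < d i) \<and> A = U * real_diag_mat n d * mat_adjoint U"

lemma pos_diag_decomp_carrier: "pos_diag_decomp n A U d \<Longrightarrow> A \<in> carrier_mat n n"
  unfolding pos_diag_decomp_def using unitary_mat_carrier by (auto simp: mult_carrier_mat_sq)

lemma mat_rpow_pos_diag_decomp:
  assumes "pos_diag_decomp n A U d"
  shows "mat_rpow A r = U * real_diag_mat n (\<lambda>i. d i powr r) * mat_adjoint U"
proof -
  have U: "unitary_mat n U" and d: "\<forall>i<n. 0 < d i" and A: "A = U * real_diag_mat n d * mat_adjoint U"
    using assms unfolding pos_diag_decomp_def by auto
  have dimA: "dim_row A = n" using pos_diag_decomp_carrier[OF assms] by simp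
  show ?thesis unfolding mat_rpow_def dimA
  proof (rule the_equality)
    show "\<exists>U' d'. unitary_mat n U' \<and> (\<forall>i<n. 0 < d' i) \<and> A = U' * real_diag_mat n d' * mat_adjoint U' \<and>
        U * real_diag_mat n (\<lambda>i. d i powr r) * mat_adjoint U = U' * real_diag_mat n (\<lambda>i. d' i powr r) * mat_adjoint U'"
      using U d A by blast
  next
    fix B assume "\<exists>U' d'. unitary_mat n U' \<and> (\<forall>i<n. 0 < d' i) \<and> A = U' * real_diag_mat n d' * mat_adjoint U' \<and>
        B = U' * real_diag_mat n (\<lambda>i. d' i powr r) * mat_adjoint U'"
    then obtain U' d' where U': "unitary_mat n U'" and A': "A = U' * real_diag_mat n d' * mat_adjoint U'"
      and B: "B = U' * real_diag_mat n (\<lambda>i. d' i powr r) * mat_adjoint U'" by blast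
    show "B = U * real_diag_mat n (\<lambda>i. d i powr r) * mat_adjoint U"
      unfolding B by (rule unitary_diag_fun_unique[OF U' U]) (use A A' in simp)
  qed
qed

lemma pos_diag_decomp_mat_rpow:
  "pos_diag_decomp n A U d \<Longrightarrow> pos_diag_decomp n (mat_rpow A r) U (\<lambda>i. d i powr r)"
  using mat_rpow_pos_diag_decomp[of n A U d r] unfolding pos_diag_decomp_def by force

lemma pos_diag_decomp_imp_pd_mat:
  assumes "pos_diag_decomp n A U d"
  shows "pd_mat n A"
  unfolding pd_mat_def
proof (intro conjI ballI impI pos_diag_decomp_carrier[OF assms])
  have U: "unitary_mat n U" and d: "\<forall>i<n. 0 < d i" and A: "A = U * real_diag_mat n d * mat_adjoint U"
    using assms unfolding pos_diag_decomp_def by auto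
  have Uc: "U \<in> carrier_mat n n" using U unitary_mat_carrier by blast
  fix v :: "complex Matrix.vec" assume v: "v \<in> carrier_vec n" and v0: "v \<noteq> 0\<^sub>v n"
  have q: "quad_form A v = complex_of_real (\<Sum>j<n. d j * spectral_weight U v j)"
    unfolding A by (rule quad_form_diag[OF Uc v])
  show "Im (quad_form A v) = 0" unfolding q by simp
  obtain l where l: "l < n" and "spectral_weight U v l \<noteq> 0"
    using sum_spectral_weight[OF U v] cvec_sq_norm_pos[of v] v v0
    by (metis (no_types, lifting) carrier_vecD less_irrefl sum.neutral lessThan_iff)
  then have "0 < d l * spectral_weight U v l"
    using d spectral_weight_nonneg[of U v l] by simp
  also have "\<dots> \<le> (\<Sum>j<n. d j * spectral_weight U v j)"
    using d spectral_weight_nonneg l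
    by (intro member_le_sum) (auto intro: mult_nonneg_nonneg less_imp_le)
  finally show "0 < Re (quad_form A v)" unfolding q by simp
qed

lemma pd_mat_imp_pos_diag_decomp:
  assumes pd: "pd_mat n A"
  obtains U d where "pos_diag_decomp n A U d"
proof -
  obtain U d where U: "unitary_mat n U" and A: "A = U * real_diag_mat n d * mat_adjoint U"
    using hermitian_spectral_decomposition[OF pd_mat_hermitian[OF pd]] by blast
  have Uc: "U \<in> carrier_mat n n" using U unitary_mat_carrier by blast
  have "0 < d i" if i: "i < n" for i
  proof -
    define v where "v = U *\<^sub>v unit_vec n i"
    have v: "v \<in> carrier_vec n" unfolding v_def using Uc by simp
    have Uv: "mat_adjoint U *\<^sub>v v = unit_vec n i"
      unfolding v_def by (rule unitary_mult_adjoint_vec_cancel(2)[OF U]) simp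
    have "cvec_sq_norm v = 1"
      using unitary_cvec_sq_norm[OF U v] Uv cvec_sq_norm_unit_vec[OF i] by simp
    then have "v \<noteq> 0\<^sub>v n" by (auto simp: cvec_sq_norm_def)
    then have "0 < Re (quad_form A v)" using pd v unfolding pd_mat_def by blast
    moreover have "quad_form A v = complex_of_real (d i)"
    proof -
      have "quad_form A v = complex_of_real (\<Sum>j<n. d j * spectral_weight U v j)"
        unfolding A by (rule quad_form_diag[OF Uc v])
      also have "(\<Sum>j<n. d j * spectral_weight U v j) = d i * spectral_weight U v i"
        by (rule sum_single_point[OF i]) (simp add: spectral_weight_def Uv i)
      finally show ?thesis by (simp add: spectral_weight_def Uv i)
    qed
    ultimately show ?thesis by simp
  qed
  then show ?thesis using that U A unfolding pos_diag_decomp_def by blast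
qed

lemma pd_mat_rpow: "pd_mat n A \<Longrightarrow> pd_mat n (mat_rpow A r)"
  by (metis pd_mat_imp_pos_diag_decomp pos_diag_decomp_imp_pd_mat pos_diag_decomp_mat_rpow)

lemma pd_mat_convex_comb:
  assumes A: "pd_mat k A" and B: "pd_mat k B" and s: "0 \<le> s" "s \<le> 1"
  shows "pd_mat k (complex_of_real (1 - s) \<cdot>\<^sub>m A + complex_of_real s \<cdot>\<^sub>m B)"
  unfolding pd_mat_def
proof (intro conjI ballI impI)
  have Ac: "A \<in> carrier_mat k k" and Bc: "B \<in> carrier_mat k k" using A B by (simp_all add: pd_mat_carrier)
  then show "complex_of_real (1 - s) \<cdot>\<^sub>m A + complex_of_real s \<cdot>\<^sub>m B \<in> carrier_mat k k" by simp
  fix v :: "complex Matrix.vec" assume v: "v \<in> carrier_vec k" and v0: "v \<noteq> 0\<^sub>v k"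
  have q: "quad_form (complex_of_real (1 - s) \<cdot>\<^sub>m A + complex_of_real s \<cdot>\<^sub>m B) v
      = complex_of_real (1 - s) * quad_form A v + complex_of_real s * quad_form B v"
    by (rule quad_form_lincomb[OF Ac Bc v])
  have qA: "Im (quad_form A v) = 0" "0 < Re (quad_form A v)"
    and qB: "Im (quad_form B v) = 0" "0 < Re (quad_form B v)"
    using A B v v0 unfolding pd_mat_def by blast+
  show "Im (quad_form (complex_of_real (1 - s) \<cdot>\<^sub>m A + complex_of_real s \<cdot>\<^sub>m B) v) = 0"
    unfolding q using qA qB by simp
  have "0 < (1 - s) * Re (quad_form A v) + s * Re (quad_form B v)"
    using s qA(2) qB(2) by (cases "s = 0") (auto intro: add_pos_nonneg add_nonneg_pos)
  then show "0 < Re (quad_form (complex_of_real (1 - s) \<cdot>\<^sub>m A + complex_of_real s \<cdot>\<^sub>m B) v)"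
    unfolding q by simp
qed

lemma trace_mat_rpow:
  "pos_diag_decomp n A U d \<Longrightarrow> trace_mat (mat_rpow A r) = complex_of_real (\<Sum>i<n. d i powr r)"
  unfolding mat_rpow_pos_diag_decomp by (rule trace_mat_diag) (simp add: pos_diag_decomp_def)

lemma quad_form_mat_rpow:
  assumes "pos_diag_decomp n A U d" "u \<in> carrier_vec n"
  shows "quad_form (mat_rpow A r) u = complex_of_real (\<Sum>j<n. d j powr r * spectral_weight U u j)"
  unfolding mat_rpow_pos_diag_decomp[OF assms(1)]
  by (rule quad_form_diag[OF _ assms(2)]) (use assms(1) unitary_mat_carrier in \<open>auto simp: pos_diag_decomp_def\<close>)

section \<open>The Loewner order\<close>

definition loewner_le :: "nat \<Rightarrow> complex mat \<Rightarrow> complex mat \<Rightarrow> bool" where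
  "loewner_le n A B \<longleftrightarrow> A \<in> carrier_mat n n \<and> B \<in> carrier_mat n n \<and> psd_mat n (B - A)"

lemma loewner_leI:
  assumes "A \<in> carrier_mat n n" "B \<in> carrier_mat n n"
    and "\<And>v. v \<in> carrier_vec n \<Longrightarrow> Im (quad_form A v) = Im (quad_form B v)"
    and "\<And>v. v \<in> carrier_vec n \<Longrightarrow> Re (quad_form A v) \<le> Re (quad_form B v)"
  shows "loewner_le n A B"
  using assms unfolding loewner_le_def psd_mat_def by (simp add: quad_form_minus minus_carrier_mat)

lemma loewner_le_quad_form:
  assumes "loewner_le n A B" "v \<in> carrier_vec n"
  shows "Im (quad_form A v) = Im (quad_form B v)" "Re (quad_form A v) \<le> Re (quad_form B v)"
  using assms unfolding loewner_le_def psd_mat_def by (auto simp: quad_form_minus)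

lemma pd_mat_if_loewner_ge_scalar:
  assumes \<mu>: "0 < \<mu>" and le: "loewner_le n (complex_of_real \<mu> \<cdot>\<^sub>m 1\<^sub>m n) A"
  shows "pd_mat n A"
  unfolding pd_mat_def
proof (intro conjI ballI impI)
  show A: "A \<in> carrier_mat n n" using le unfolding loewner_le_def by simp
  fix v :: "complex Matrix.vec" assume v: "v \<in> carrier_vec n" and v0: "v \<noteq> 0\<^sub>v n"
  have q: "quad_form (complex_of_real \<mu> \<cdot>\<^sub>m 1\<^sub>m n) v = complex_of_real (\<mu> * cvec_sq_norm v)"
    using v by (simp add: quad_form_smult[OF one_carrier_mat v] quad_form_one)
  show "Im (quad_form A v) = 0" using loewner_le_quad_form(1)[OF le v] q by simp
  have "0 < \<mu> * cvec_sq_norm v" using \<mu> cvec_sq_norm_pos[of v] v v0 by simp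
  then show "0 < Re (quad_form A v)" using loewner_le_quad_form(2)[OF le v] q by simp
qed

lemma pos_diag_decomp_loewner_ge_scalar:
  assumes dec: "pos_diag_decomp n A U d"
  obtains \<mu> where "0 < \<mu>" "loewner_le n (complex_of_real \<mu> \<cdot>\<^sub>m 1\<^sub>m n) A"
proof
  have U: "unitary_mat n U" and d: "\<forall>i<n. 0 < d i" and A: "A = U * real_diag_mat n d * mat_adjoint U"
    using dec unfolding pos_diag_decomp_def by auto
  have Uc: "U \<in> carrier_mat n n" using U unitary_mat_carrier by blast
  define \<mu> where "\<mu> = Min (insert 1 (d ` {..<n}))"
  show "0 < \<mu>" unfolding \<mu>_def using d by (subst Min_gr_iff) auto
  have \<mu>_le: "\<mu> \<le> d j" if "j < n" for j unfolding \<mu>_def using that by (intro Min_le) auto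
  show "loewner_le n (complex_of_real \<mu> \<cdot>\<^sub>m 1\<^sub>m n) A"
  proof (rule loewner_leI)
    fix v :: "complex Matrix.vec" assume v: "v \<in> carrier_vec n"
    have qI: "quad_form (complex_of_real \<mu> \<cdot>\<^sub>m 1\<^sub>m n) v = complex_of_real (\<Sum>j<n. \<mu> * spectral_weight U v j)"
      using v by (simp add: quad_form_smult[OF one_carrier_mat v] quad_form_one
          sum_spectral_weight[OF U v, symmetric] sum_distrib_left)
    have qA: "quad_form A v = complex_of_real (\<Sum>j<n. d j * spectral_weight U v j)"
      unfolding A by (rule quad_form_diag[OF Uc v])
    show "Im (quad_form (complex_of_real \<mu> \<cdot>\<^sub>m 1\<^sub>m n) v) = Im (quad_form A v)"
      unfolding qI qA by simp
    show "Re (quad_form (complex_of_real \<mu> \<cdot>\<^sub>m 1\<^sub>m n) v) \<le> Re (quad_form A v)"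
      unfolding qI qA using \<mu>_le spectral_weight_nonneg
      by (auto intro!: sum_mono mult_right_mono)
  qed (use pos_diag_decomp_carrier[OF dec] in auto)
qed

section \<open>Operator convexity of the resolvent\<close>

lemma completing_square_le:
  assumes m: "0 < m"
  shows "2 * Re (cnj z * y) - m * (cmod z)^2 \<le> (cmod y)^2 / m"
proof -
  have "0 \<le> (m * Re z - Re y)^2 + (m * Im z - Im y)^2" by simp
  then have "m * (2 * Re (cnj z * y) - m * (cmod z)^2) \<le> (cmod y)^2"
    unfolding cmod_power2 by (simp add: power2_eq_square algebra_simps)
  then show ?thesis using m by (simp add: field_simps mult.commute)
qed

lemma completing_square_eq:
  assumes m: "0 < m"
  shows "2 * Re (cnj (y / complex_of_real m) * y) - m * (cmod (y / complex_of_real m))^2 = (cmod y)^2 / m"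
proof -
  have "cnj (y / complex_of_real m) * y = (y * cnj y) / complex_of_real m"
    by (simp add: mult.commute)
  also have "\<dots> = complex_of_real ((cmod y)^2 / m)"
    by (simp only: complex_norm_square[symmetric] of_real_divide)
  finally have "cnj (y / complex_of_real m) * y = complex_of_real ((cmod y)^2 / m)" .
  then have 1: "Re (cnj (y / complex_of_real m) * y) = (cmod y)^2 / m"
    by (simp only: Re_complex_of_real)
  have 2: "(cmod (y / complex_of_real m))^2 = (cmod y)^2 / m^2"
    using m by (simp add: norm_divide power_divide)
  show ?thesis unfolding 1 2 using m by (simp add: power2_eq_square field_simps)
qed

text \<open>The supremum over \<open>v\<close> of this functional is \<open>u\<^sup>* (A + \<tau>)\<^sup>-\<^sup>1 u\<close>.\<close>

definition resolvent_functional :: "complex mat \<Rightarrow> real \<Rightarrow> complex Matrix.vec \<Rightarrow> complex Matrix.vec \<Rightarrow> real" where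
  "resolvent_functional A \<tau> u v = 2 * Re (conjugate v \<bullet> u) - Re (quad_form A v) - \<tau> * Re (conjugate v \<bullet> v)"

text \<open>\<open>resolvent_form n U x u \<tau> = u\<^sup>* (X + \<tau>)\<^sup>-\<^sup>1 u\<close> for \<open>X = U diag(x) U\<^sup>*\<close>.\<close>

definition resolvent_form :: "nat \<Rightarrow> complex mat \<Rightarrow> (nat \<Rightarrow> real) \<Rightarrow> complex Matrix.vec \<Rightarrow> real \<Rightarrow> real" where
  "resolvent_form n U x u \<tau> = (\<Sum>j<n. spectral_weight U u j / (x j + \<tau>))"

lemma resolvent_functional_diag:
  assumes U: "unitary_mat n U" and u: "u \<in> carrier_vec n" and v: "v \<in> carrier_vec n"
  defines "y \<equiv> mat_adjoint U *\<^sub>v u" and "z \<equiv> mat_adjoint U *\<^sub>v v"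
  shows "resolvent_functional (U * real_diag_mat n x * mat_adjoint U) \<tau> u v
    = (\<Sum>j<n. 2 * Re (cnj (z $ j) * y $ j) - (x j + \<tau>) * (cmod (z $ j))^2)"
proof -
  have Uc: "U \<in> carrier_mat n n" using U unitary_mat_carrier by blast
  have y: "y \<in> carrier_vec n" and z: "z \<in> carrier_vec n" unfolding y_def z_def using Uc by simp_all
  have "conjugate v \<bullet> u = conjugate z \<bullet> y"
    unfolding y_def z_def by (rule unitary_scalar_prod[OF U u v, symmetric])
  also have "\<dots> = (\<Sum>j<n. cnj (z $ j) * y $ j)"
    using y z by (simp add: scalar_prod_def atLeast0LessThan)
  finally have 1: "conjugate v \<bullet> u = (\<Sum>j<n. cnj (z $ j) * y $ j)" .
  have 2: "conjugate v \<bullet> v = complex_of_real (\<Sum>j<n. (cmod (z $ j))^2)"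
    using sum_spectral_weight[OF U v] z
    by (simp add: conjugate_scalar_prod_self spectral_weight_def z_def)
  show ?thesis
    unfolding resolvent_functional_def quad_form_diag[OF Uc v] 1 2
    by (simp add: spectral_weight_def z_def[symmetric] Re_sum sum_subtractf sum_distrib_left
        sum.distrib algebra_simps)
qed

lemma resolvent_functional_le:
  assumes U: "unitary_mat n U" and u: "u \<in> carrier_vec n" and v: "v \<in> carrier_vec n"
    and pos: "\<forall>j<n. 0 < x j + \<tau>"
  shows "resolvent_functional (U * real_diag_mat n x * mat_adjoint U) \<tau> u v \<le> resolvent_form n U x u \<tau>"
  unfolding resolvent_functional_diag[OF U u v] resolvent_form_def spectral_weight_def
  by (rule sum_mono) (use pos completing_square_le in simp)

lemma resolvent_functional_maximum:
  assumes U: "unitary_mat n U" and u: "u \<in> carrier_vec n" and pos: "\<forall>j<n. 0 < x j + \<tau>"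
  defines "v \<equiv> U *\<^sub>v Matrix.vec n (\<lambda>j. (mat_adjoint U *\<^sub>v u) $ j / complex_of_real (x j + \<tau>))"
  shows "v \<in> carrier_vec n"
    and "resolvent_functional (U * real_diag_mat n x * mat_adjoint U) \<tau> u v = resolvent_form n U x u \<tau>"
proof -
  have Uc: "U \<in> carrier_mat n n" using U unitary_mat_carrier by blast
  show v: "v \<in> carrier_vec n" unfolding v_def using Uc by simp
  have z: "mat_adjoint U *\<^sub>v v = Matrix.vec n (\<lambda>j. (mat_adjoint U *\<^sub>v u) $ j / complex_of_real (x j + \<tau>))"
    unfolding v_def by (rule unitary_mult_adjoint_vec_cancel(2)[OF U]) simp
  show "resolvent_functional (U * real_diag_mat n x * mat_adjoint U) \<tau> u v = resolvent_form n U x u \<tau>"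
    unfolding resolvent_functional_diag[OF U u v] resolvent_form_def spectral_weight_def z
    using pos completing_square_eq by (intro sum.cong) (simp_all del: of_real_add)
qed

text \<open>Each \<open>resolvent_functional \<cdot> \<tau> u v\<close> is affine in the matrix, and the resolvent form is
  their pointwise maximum, hence convex.\<close>

theorem resolvent_form_convex:
  assumes A: "pos_diag_decomp k A UA a" and B: "pos_diag_decomp k B UB b"
    and C: "pos_diag_decomp k C UC c"
    and CAB: "C = complex_of_real (1 - s) \<cdot>\<^sub>m A + complex_of_real s \<cdot>\<^sub>m B"
    and s: "0 \<le> s" "s \<le> 1" and \<tau>: "0 \<le> \<tau>" and u: "u \<in> carrier_vec k"
  shows "resolvent_form k UC c u \<tau> \<le> (1 - s) * resolvent_form k UA a u \<tau> + s * resolvent_form k UB b u \<tau>"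
proof -
  have pos: "\<forall>j<k. 0 < x j + \<tau>" if "pos_diag_decomp k X U x" for X U x
    using that \<tau> unfolding pos_diag_decomp_def by (simp add: add_pos_nonneg)
  note decomp = A[unfolded pos_diag_decomp_def] B[unfolded pos_diag_decomp_def]
    C[unfolded pos_diag_decomp_def]
  have UC: "unitary_mat k UC" using C unfolding pos_diag_decomp_def by simp
  define v where "v = UC *\<^sub>v Matrix.vec k (\<lambda>j. (mat_adjoint UC *\<^sub>v u) $ j / complex_of_real (c j + \<tau>))"
  have v: "v \<in> carrier_vec k"
    unfolding v_def by (rule resolvent_functional_maximum(1)[OF UC u pos[OF C]])
  have eqC: "resolvent_functional C \<tau> u v = resolvent_form k UC c u \<tau>"
    using C unfolding v_def pos_diag_decomp_def
    using resolvent_functional_maximum(2)[OF UC u pos[OF C]] by simp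
  have "resolvent_functional C \<tau> u v
      = (1 - s) * resolvent_functional A \<tau> u v + s * resolvent_functional B \<tau> u v"
    unfolding resolvent_functional_def CAB
    using pos_diag_decomp_carrier[OF A] pos_diag_decomp_carrier[OF B] v
    by (simp add: quad_form_lincomb[of _ k] algebra_simps del: of_real_diff)
  also have "\<dots> \<le> (1 - s) * resolvent_form k UA a u \<tau> + s * resolvent_form k UB b u \<tau>"
    using resolvent_functional_le[OF _ u v pos[OF A]] resolvent_functional_le[OF _ u v pos[OF B]]
      decomp s by (intro add_mono mult_left_mono) auto
  finally show ?thesis unfolding eqC .
qed

section \<open>An integral representation of real powers\<close>

definition power_kernel :: "real \<Rightarrow> real \<Rightarrow> real \<Rightarrow> real" where
  "power_kernel a x t = indicator {0<..} t * (t powr (a - 1) / (x + t))"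

lemma power_kernel_measurable [measurable]: "power_kernel a x \<in> borel_measurable borel"
  unfolding power_kernel_def by measurable

lemma power_kernel_nonneg: "0 < x \<Longrightarrow> 0 \<le> power_kernel a x t"
  unfolding power_kernel_def by (auto simp: indicator_def)

lemma power_kernel_scale:
  assumes x: "0 < x"
  shows "power_kernel a x (x * s) = x powr (a - 2) * power_kernel a 1 s"
proof (cases "0 < s")
  case True
  have "power_kernel a x (x * s) = x powr (a - 1) * s powr (a - 1) / (x * (1 + s))"
    unfolding power_kernel_def using x True by (simp add: powr_mult distrib_left)
  also have "\<dots> = (x powr (a - 1) / x) * (s powr (a - 1) / (1 + s))" by simp
  also have "x powr (a - 1) / x = x powr (a - 2)"
    using x by (simp add: powr_diff power2_eq_square)
  finally show ?thesis unfolding power_kernel_def using True by simp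
next
  case False
  then show ?thesis using x unfolding power_kernel_def by (simp add: zero_less_mult_iff)
qed

lemma nn_integral_power_kernel_scale:
  assumes x: "0 < x"
  shows "(\<integral>\<^sup>+t. power_kernel a x t \<partial>lborel) = ennreal (x powr (a - 1)) * (\<integral>\<^sup>+t. power_kernel a 1 t \<partial>lborel)"
proof -
  have "(\<integral>\<^sup>+t. power_kernel a x t \<partial>lborel) = ennreal x * (\<integral>\<^sup>+s. power_kernel a x (0 + x * s) \<partial>lborel)"
    using nn_integral_real_affine[of "\<lambda>t. ennreal (power_kernel a x t)" x 0] x by simp
  also have "(\<integral>\<^sup>+s. power_kernel a x (0 + x * s) \<partial>lborel)
      = ennreal (x powr (a - 2)) * (\<integral>\<^sup>+s. power_kernel a 1 s \<partial>lborel)"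
    using x by (simp add: power_kernel_scale ennreal_mult power_kernel_nonneg nn_integral_cmult)
  also have "ennreal x * (ennreal (x powr (a - 2)) * (\<integral>\<^sup>+s. power_kernel a 1 s \<partial>lborel))
      = ennreal (x * x powr (a - 2)) * (\<integral>\<^sup>+s. power_kernel a 1 s \<partial>lborel)"
    using x by (simp add: ennreal_mult mult.assoc)
  also have "x * x powr (a - 2) = x powr (a - 1)"
    using x by (simp add: powr_diff power2_eq_square)
  finally show ?thesis .
qed

lemma power_kernel_le:
  assumes "a < 1"
  shows "power_kernel a 1 t \<le> indicator {0..1} t * t powr (a - 1) + indicator {1..} t * t powr (a - 2)"
proof (cases "0 < t")
  case False then show ?thesis unfolding power_kernel_def by (auto simp: indicator_def)
next
  case True
  show ?thesis
  proof (cases "t \<le> 1")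
    case True
    have "t powr (a - 1) / (1 + t) \<le> t powr (a - 1)" using \<open>0 < t\<close> by (simp add: divide_le_eq)
    then show ?thesis unfolding power_kernel_def using \<open>0 < t\<close> True by (auto simp: indicator_def)
  next
    case False
    have "t powr (a - 1) / (1 + t) \<le> t powr (a - 1) / t"
      using \<open>0 < t\<close> by (intro divide_left_mono) simp_all
    also have "\<dots> = t powr (a - 2)" using \<open>0 < t\<close> by (simp add: powr_diff power2_eq_square)
    finally show ?thesis unfolding power_kernel_def using \<open>0 < t\<close> False by (simp add: indicator_def)
  qed
qed

lemma nn_integral_power_kernel_finite:
  assumes a: "0 < a" "a < 1"
  shows "(\<integral>\<^sup>+t. power_kernel a 1 t \<partial>lborel) < \<infinity>"
proof -
  have i1: "(\<integral>\<^sup>+t. indicator {0..1} t * t powr (a - 1) \<partial>lborel) = ennreal (1 powr (a - 1 + 1) / (a - 1 + 1))"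
    by (rule nn_integral_has_integral_lebesgue) (use has_integral_powr_from_0[of "a - 1" 1] a in simp_all)
  have i2: "(\<integral>\<^sup>+t. indicator {1..} t * t powr (a - 2) \<partial>lborel) = ennreal (- (1 powr (a - 2 + 1)) / (a - 2 + 1))"
    by (rule nn_integral_has_integral_lebesgue) (use has_integral_powr_to_inf[of "a - 2" 1] a in simp_all)
  have "(\<integral>\<^sup>+t. power_kernel a 1 t \<partial>lborel)
      \<le> (\<integral>\<^sup>+t. ennreal (indicator {0..1} t * t powr (a - 1)) + ennreal (indicator {1..} t * t powr (a - 2)) \<partial>lborel)"
    using power_kernel_le[OF a(2)]
    by (intro nn_integral_mono) (simp add: ennreal_plus[symmetric] del: ennreal_plus)
  also have "\<dots> = (\<integral>\<^sup>+t. indicator {0..1} t * t powr (a - 1) \<partial>lborel) + (\<integral>\<^sup>+t. indicator {1..} t * t powr (a - 2) \<partial>lborel)"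
    by (rule nn_integral_add) measurable
  also have "\<dots> < \<infinity>" unfolding i1 i2 by simp
  finally show ?thesis .
qed

lemma nn_integral_power_kernel_pos:
  assumes "a < 1"
  shows "0 < (\<integral>\<^sup>+t. power_kernel a 1 t \<partial>lborel)"
proof -
  have "(0::ennreal) < ennreal (1/2) * emeasure lborel {0<..1::real}"
    by (simp add: ennreal_zero_less_mult_iff del: ennreal_half)
  also have "\<dots> = (\<integral>\<^sup>+t. ennreal (1/2) * indicator {0<..1::real} t \<partial>lborel)"
    by (subst nn_integral_cmult_indicator) simp_all
  also have "\<dots> \<le> (\<integral>\<^sup>+t. power_kernel a 1 t \<partial>lborel)"
  proof (rule nn_integral_mono)
    fix t :: real
    show "ennreal (1/2) * indicator {0<..1} t \<le> ennreal (power_kernel a 1 t)"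
    proof (cases "0 < t \<and> t \<le> 1")
      case True
      have "1 \<le> t powr (a - 1)" using powr_mono2'[of "a - 1" t 1] True assms by simp
      moreover have "1/2 \<le> 1 / (1 + t)" using True by (simp add: divide_simps)
      ultimately have "1/2 \<le> t powr (a - 1) / (1 + t)"
        using True by (smt (verit) divide_right_mono)
      then show ?thesis using True unfolding power_kernel_def by (simp add: ennreal_leI del: ennreal_half)
    qed (auto simp: indicator_def)
  qed
  finally show ?thesis .
qed

text \<open>The value is \<open>\<pi> / sin (\<pi> a)\<close>; only its positivity matters here.\<close>

definition power_kernel_const :: "real \<Rightarrow> real" where
  "power_kernel_const a = enn2real (\<integral>\<^sup>+t. power_kernel a 1 t \<partial>lborel)"

lemma power_kernel_const:
  assumes "0 < a" "a < 1"
  shows "(\<integral>\<^sup>+t. power_kernel a 1 t \<partial>lborel) = ennreal (power_kernel_const a)"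
    and "0 < power_kernel_const a"
proof -
  show eq: "(\<integral>\<^sup>+t. power_kernel a 1 t \<partial>lborel) = ennreal (power_kernel_const a)"
    unfolding power_kernel_const_def
    using nn_integral_power_kernel_finite[OF assms] by (simp add: ennreal_enn2real_if)
  show "0 < power_kernel_const a"
    using nn_integral_power_kernel_pos[OF assms(2)] unfolding eq by simp
qed

lemma has_integral_powr_resolvent:
  assumes a: "0 < a" "a < 1" and x: "0 < x"
  shows "((\<lambda>t. t powr (a - 1) / (x + t)) has_integral power_kernel_const a * x powr (a - 1)) {0<..}"
proof -
  have "(\<integral>\<^sup>+t. power_kernel a x t \<partial>lborel) = ennreal (power_kernel_const a * x powr (a - 1))"
    using nn_integral_power_kernel_scale[OF x] power_kernel_const[OF a]
    by (simp add: ennreal_mult mult.commute)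
  then have "(power_kernel a x has_integral power_kernel_const a * x powr (a - 1)) UNIV"
    using power_kernel_const(2)[OF a] power_kernel_nonneg[OF x]
    by (intro nn_integral_has_integral) auto
  then have "((\<lambda>t. if t \<in> {0<..} then t powr (a - 1) / (x + t) else 0)
      has_integral power_kernel_const a * x powr (a - 1)) UNIV"
    by (rule has_integral_eq[rotated]) (simp add: power_kernel_def)
  then show ?thesis by (simp only: has_integral_restrict_UNIV)
qed

lemma has_integral_powr_resolvent_sum:
  fixes w x :: "nat \<Rightarrow> real"
  assumes a: "0 < a" "a < 1" and x: "\<forall>j<n. 0 < x j"
  shows "((\<lambda>t. t powr (a - 1) * (\<Sum>j<n. w j / (x j + t)))
    has_integral power_kernel_const a * (\<Sum>j<n. w j * x j powr (a - 1))) {0<..}"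
proof -
  have "((\<lambda>t. w j * (t powr (a - 1) / (x j + t)))
      has_integral w j * (power_kernel_const a * x j powr (a - 1))) {0<..}" if "j < n" for j
    using has_integral_powr_resolvent[OF a] x that by (intro has_integral_mult_right) auto
  then have "((\<lambda>t. \<Sum>j<n. w j * (t powr (a - 1) / (x j + t)))
      has_integral (\<Sum>j<n. w j * (power_kernel_const a * x j powr (a - 1)))) {0<..}"
    by (intro has_integral_sum) auto
  then show ?thesis
    by (simp add: sum_distrib_left algebra_simps)
qed

section \<open>Operator convexity and concavity of real powers\<close>

lemma has_integral_resolvent_form:
  assumes a: "0 < a" "a < 1" and X: "pos_diag_decomp n X U x"
  shows "((\<lambda>t. t powr (a - 1) * resolvent_form n U x u t)
    has_integral power_kernel_const a * (\<Sum>j<n. x j powr (a - 1) * spectral_weight U u j)) {0<..}"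
  using has_integral_powr_resolvent_sum[OF a, of n x "spectral_weight U u"] X
  unfolding resolvent_form_def pos_diag_decomp_def by (simp add: mult.commute)

lemma has_integral_resolvent_form_compl:
  assumes a: "0 < a" "a < 1" and X: "pos_diag_decomp n X U x" and u: "u \<in> carrier_vec n"
  shows "((\<lambda>t. t powr (a - 1) * (cvec_sq_norm u - t * resolvent_form n U x u t))
    has_integral power_kernel_const a * (\<Sum>j<n. x j powr a * spectral_weight U u j)) {0<..}"
proof -
  have U: "unitary_mat n U" and x: "\<forall>j<n. 0 < x j" using X unfolding pos_diag_decomp_def by auto
  have int: "((\<lambda>t. t powr (a - 1) * (\<Sum>j<n. spectral_weight U u j * x j / (x j + t)))
      has_integral power_kernel_const a * (\<Sum>j<n. spectral_weight U u j * x j * x j powr (a - 1))) {0<..}"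
    using has_integral_powr_resolvent_sum[OF a x, of "\<lambda>j. spectral_weight U u j * x j"] by simp
  have eq_fun: "(\<Sum>j<n. spectral_weight U u j * x j / (x j + t)) = cvec_sq_norm u - t * resolvent_form n U x u t"
    if "t \<in> {0<..}" for t
  proof -
    have "spectral_weight U u j * x j / (x j + t) = spectral_weight U u j - t * (spectral_weight U u j / (x j + t))"
      if "j < n" for j
    proof -
      have "0 < x j + t" using x that \<open>t \<in> {0<..}\<close> by (simp add: add_pos_pos)
      then show ?thesis by (simp add: field_simps)
    qed
    then show ?thesis
      unfolding resolvent_form_def sum_spectral_weight[OF U u, symmetric] sum_distrib_left
      by (simp add: sum_subtractf[symmetric])
  qed
  have eq_val: "(\<Sum>j<n. spectral_weight U u j * x j * x j powr (a - 1)) = (\<Sum>j<n. x j powr a * spectral_weight U u j)"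
  proof (rule sum.cong)
    fix j assume "j \<in> {..<n}"
    then have "0 \<le> x j" using x by (simp add: less_imp_le)
    then have "x j * x j powr (a - 1) = x j powr a" using powr_mult_base[of "x j" "a - 1"] by simp
    then show "spectral_weight U u j * x j * x j powr (a - 1) = x j powr a * spectral_weight U u j"
      by (metis mult.assoc mult.commute)
  qed simp
  show ?thesis unfolding eq_val[symmetric] by (rule has_integral_eq[OF _ int]) (simp add: eq_fun)
qed

context
  fixes k :: nat and A B C UA UB UC :: "complex mat" and a b c :: "nat \<Rightarrow> real" and s :: real
  assumes A: "pos_diag_decomp k A UA a" and B: "pos_diag_decomp k B UB b"
    and C: "pos_diag_decomp k C UC c"
    and CAB: "C = complex_of_real (1 - s) \<cdot>\<^sub>m A + complex_of_real s \<cdot>\<^sub>m B"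
    and s: "0 \<le> s" "s \<le> 1"
begin

lemma powr_quad_convex:
  assumes p: "-1 \<le> p" "p < 0" and u: "u \<in> carrier_vec k"
  shows "(\<Sum>j<k. c j powr p * spectral_weight UC u j)
    \<le> (1 - s) * (\<Sum>j<k. a j powr p * spectral_weight UA u j) + s * (\<Sum>j<k. b j powr p * spectral_weight UB u j)"
proof (cases "p = -1")
  case True
  have "(\<Sum>j<k. x j powr p * spectral_weight U u j) = resolvent_form k U x u 0"
    if "pos_diag_decomp k X U x" for X U x
    using that True unfolding resolvent_form_def pos_diag_decomp_def
    by (intro sum.cong) (auto simp: powr_minus divide_inverse mult.commute)
  then show ?thesis
    using resolvent_form_convex[OF A B C CAB s order_refl u] A B C by simp
next
  case False
  then have a: "0 < 1 + p" "1 + p < 1" using p by simp_all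
  note int = has_integral_resolvent_form[OF a, simplified]
  define K where "K = power_kernel_const (1 + p)"
  have "K * (\<Sum>j<k. c j powr p * spectral_weight UC u j)
      \<le> (1 - s) * (K * (\<Sum>j<k. a j powr p * spectral_weight UA u j)) + s * (K * (\<Sum>j<k. b j powr p * spectral_weight UB u j))"
    unfolding K_def
  proof (rule has_integral_le[OF int[OF C] has_integral_add[OF has_integral_mult_right has_integral_mult_right, OF int[OF A] int[OF B]]])
    fix t :: real assume "t \<in> {0<..}"
    then show "t powr p * resolvent_form k UC c u t
      \<le> (1 - s) * (t powr p * resolvent_form k UA a u t) + s * (t powr p * resolvent_form k UB b u t)"
      using resolvent_form_convex[OF A B C CAB s _ u, of t] mult_left_mono[of _ _ "t powr p"]
      by (fastforce simp: algebra_simps)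
  qed
  then have "K * (\<Sum>j<k. c j powr p * spectral_weight UC u j)
      \<le> K * ((1 - s) * (\<Sum>j<k. a j powr p * spectral_weight UA u j) + s * (\<Sum>j<k. b j powr p * spectral_weight UB u j))"
    by (simp add: algebra_simps)
  moreover have "0 < K" unfolding K_def using power_kernel_const(2)[OF a] .
  ultimately show ?thesis by (rule mult_left_le_imp_le)
qed

lemma powr_quad_linear:
  assumes u: "u \<in> carrier_vec k"
  shows "(\<Sum>j<k. c j powr 1 * spectral_weight UC u j)
    = (1 - s) * (\<Sum>j<k. a j powr 1 * spectral_weight UA u j) + s * (\<Sum>j<k. b j powr 1 * spectral_weight UB u j)"
proof -
  have q: "quad_form X u = complex_of_real (\<Sum>j<k. x j powr 1 * spectral_weight U u j)"
    if "pos_diag_decomp k X U x" for X U x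
  proof -
    have "(\<Sum>j<k. x j powr 1 * spectral_weight U u j) = (\<Sum>j<k. x j * spectral_weight U u j)"
      using that unfolding pos_diag_decomp_def by (intro sum.cong) auto
    then show ?thesis
      using that u quad_form_diag unitary_mat_carrier unfolding pos_diag_decomp_def by auto
  qed
  have "quad_form C u = complex_of_real (1 - s) * quad_form A u + complex_of_real s * quad_form B u"
    unfolding CAB using pos_diag_decomp_carrier[OF A] pos_diag_decomp_carrier[OF B] u
    by (rule quad_form_lincomb)
  then have "complex_of_real (\<Sum>j<k. c j powr 1 * spectral_weight UC u j) = complex_of_real
      ((1 - s) * (\<Sum>j<k. a j powr 1 * spectral_weight UA u j) + s * (\<Sum>j<k. b j powr 1 * spectral_weight UB u j))"
    unfolding q[OF A] q[OF B] q[OF C] by simp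
  then show ?thesis by (simp only: of_real_eq_iff)
qed

lemma powr_quad_concave:
  assumes p: "0 < p" "p \<le> 1" and u: "u \<in> carrier_vec k"
  shows "(1 - s) * (\<Sum>j<k. a j powr p * spectral_weight UA u j) + s * (\<Sum>j<k. b j powr p * spectral_weight UB u j)
    \<le> (\<Sum>j<k. c j powr p * spectral_weight UC u j)"
proof (cases "p = 1")
  case True
  then show ?thesis using powr_quad_linear[OF u] by simp
next
  case False
  then have a: "0 < p" "p < 1" using p by simp_all
  note int = has_integral_resolvent_form_compl[OF a _ u]
  define K where "K = power_kernel_const p"
  let ?W = "cvec_sq_norm u"
  have "(1 - s) * (K * (\<Sum>j<k. a j powr p * spectral_weight UA u j)) + s * (K * (\<Sum>j<k. b j powr p * spectral_weight UB u j))
      \<le> K * (\<Sum>j<k. c j powr p * spectral_weight UC u j)"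
    unfolding K_def
  proof (rule has_integral_le[OF has_integral_add[OF has_integral_mult_right has_integral_mult_right, OF int[OF A] int[OF B]] int[OF C]])
    fix t :: real assume t: "t \<in> {0<..}"
    have "t * resolvent_form k UC c u t \<le> t * ((1 - s) * resolvent_form k UA a u t + s * resolvent_form k UB b u t)"
      using resolvent_form_convex[OF A B C CAB s _ u, of t] t by (intro mult_left_mono) auto
    then have "(1 - s) * (?W - t * resolvent_form k UA a u t) + s * (?W - t * resolvent_form k UB b u t)
        \<le> ?W - t * resolvent_form k UC c u t"
      by (simp add: algebra_simps)
    then show "(1 - s) * (t powr (p - 1) * (?W - t * resolvent_form k UA a u t))
        + s * (t powr (p - 1) * (?W - t * resolvent_form k UB b u t))
      \<le> t powr (p - 1) * (?W - t * resolvent_form k UC c u t)"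
      using mult_left_mono[of _ _ "t powr (p - 1)"] by (fastforce simp: algebra_simps)
  qed
  then have "K * ((1 - s) * (\<Sum>j<k. a j powr p * spectral_weight UA u j) + s * (\<Sum>j<k. b j powr p * spectral_weight UB u j))
      \<le> K * (\<Sum>j<k. c j powr p * spectral_weight UC u j)"
    by (simp add: algebra_simps)
  moreover have "0 < K" unfolding K_def using power_kernel_const(2)[OF a] .
  ultimately show ?thesis by (rule mult_left_le_imp_le)
qed

end

lemma quad_form_rpow_comb:
  assumes A: "pos_diag_decomp k A UA a" and B: "pos_diag_decomp k B UB b" and u: "u \<in> carrier_vec k"
  shows "quad_form (complex_of_real \<alpha> \<cdot>\<^sub>m mat_rpow A p + complex_of_real \<beta> \<cdot>\<^sub>m mat_rpow B p) u
    = complex_of_real (\<alpha> * (\<Sum>j<k. a j powr p * spectral_weight UA u j) + \<beta> * (\<Sum>j<k. b j powr p * spectral_weight UB u j))"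
  using quad_form_lincomb[OF pos_diag_decomp_carrier pos_diag_decomp_carrier u,
      OF pos_diag_decomp_mat_rpow[OF A] pos_diag_decomp_mat_rpow[OF B]]
  by (simp add: quad_form_mat_rpow[OF A u] quad_form_mat_rpow[OF B u])

theorem mat_rpow_operator_convex:
  assumes A: "pd_mat k A" and B: "pd_mat k B" and s: "0 \<le> s" "s \<le> 1" and p: "-1 \<le> p" "p < 0"
  shows "loewner_le k (mat_rpow (complex_of_real (1 - s) \<cdot>\<^sub>m A + complex_of_real s \<cdot>\<^sub>m B) p)
    (complex_of_real (1 - s) \<cdot>\<^sub>m mat_rpow A p + complex_of_real s \<cdot>\<^sub>m mat_rpow B p)"
proof -
  define C where "C = complex_of_real (1 - s) \<cdot>\<^sub>m A + complex_of_real s \<cdot>\<^sub>m B"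
  obtain UA a UB b UC c where dA: "pos_diag_decomp k A UA a" and dB: "pos_diag_decomp k B UB b"
    and dC: "pos_diag_decomp k C UC c"
    using pd_mat_imp_pos_diag_decomp A B pd_mat_convex_comb[OF A B s, folded C_def] by metis
  show ?thesis unfolding C_def[symmetric]
  proof (rule loewner_leI)
    fix u :: "complex Matrix.vec" assume u: "u \<in> carrier_vec k"
    note q = quad_form_mat_rpow[OF dC u] quad_form_rpow_comb[OF dA dB u]
    show "Im (quad_form (mat_rpow C p) u)
      = Im (quad_form (complex_of_real (1 - s) \<cdot>\<^sub>m mat_rpow A p + complex_of_real s \<cdot>\<^sub>m mat_rpow B p) u)"
      unfolding q by simp
    show "Re (quad_form (mat_rpow C p) u)
      \<le> Re (quad_form (complex_of_real (1 - s) \<cdot>\<^sub>m mat_rpow A p + complex_of_real s \<cdot>\<^sub>m mat_rpow B p) u)"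
      unfolding q using powr_quad_convex[OF dA dB dC C_def s p u] by simp
  qed (use pos_diag_decomp_carrier[OF pos_diag_decomp_mat_rpow[OF dA]]
      pos_diag_decomp_carrier[OF pos_diag_decomp_mat_rpow[OF dB]]
      pos_diag_decomp_carrier[OF pos_diag_decomp_mat_rpow[OF dC]] in auto)
qed

theorem mat_rpow_operator_concave:
  assumes A: "pd_mat k A" and B: "pd_mat k B" and s: "0 \<le> s" "s \<le> 1" and p: "0 < p" "p \<le> 1"
  shows "loewner_le k (complex_of_real (1 - s) \<cdot>\<^sub>m mat_rpow A p + complex_of_real s \<cdot>\<^sub>m mat_rpow B p)
    (mat_rpow (complex_of_real (1 - s) \<cdot>\<^sub>m A + complex_of_real s \<cdot>\<^sub>m B) p)"
proof -
  define C where "C = complex_of_real (1 - s) \<cdot>\<^sub>m A + complex_of_real s \<cdot>\<^sub>m B"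
  obtain UA a UB b UC c where dA: "pos_diag_decomp k A UA a" and dB: "pos_diag_decomp k B UB b"
    and dC: "pos_diag_decomp k C UC c"
    using pd_mat_imp_pos_diag_decomp A B pd_mat_convex_comb[OF A B s, folded C_def] by metis
  show ?thesis unfolding C_def[symmetric]
  proof (rule loewner_leI)
    fix u :: "complex Matrix.vec" assume u: "u \<in> carrier_vec k"
    note q = quad_form_mat_rpow[OF dC u] quad_form_rpow_comb[OF dA dB u]
    show "Im (quad_form (complex_of_real (1 - s) \<cdot>\<^sub>m mat_rpow A p + complex_of_real s \<cdot>\<^sub>m mat_rpow B p) u)
      = Im (quad_form (mat_rpow C p) u)"
      unfolding q by simp
    show "Re (quad_form (complex_of_real (1 - s) \<cdot>\<^sub>m mat_rpow A p + complex_of_real s \<cdot>\<^sub>m mat_rpow B p) u)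
      \<le> Re (quad_form (mat_rpow C p) u)"
      unfolding q using powr_quad_concave[OF dA dB dC C_def s p u] by simp
  qed (use pos_diag_decomp_carrier[OF pos_diag_decomp_mat_rpow[OF dA]]
      pos_diag_decomp_carrier[OF pos_diag_decomp_mat_rpow[OF dB]]
      pos_diag_decomp_carrier[OF pos_diag_decomp_mat_rpow[OF dC]] in auto)
qed

section \<open>Positive linear maps\<close>

lemma linear_mat_map_carrier: "linear_mat_map k n \<Phi> \<Longrightarrow> A \<in> carrier_mat k k \<Longrightarrow> \<Phi> A \<in> carrier_mat n n"
  unfolding linear_mat_map_def by blast

lemma linear_mat_map_lincomb:
  assumes L: "linear_mat_map k n \<Phi>" and X: "X \<in> carrier_mat k k" and Y: "Y \<in> carrier_mat k k"
  shows "\<Phi> (c \<cdot>\<^sub>m X + d \<cdot>\<^sub>m Y) = c \<cdot>\<^sub>m \<Phi> X + d \<cdot>\<^sub>m \<Phi> Y"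
  using L X Y unfolding linear_mat_map_def by simp

lemma linear_mat_map_minus:
  assumes L: "linear_mat_map k n \<Phi>" and X: "X \<in> carrier_mat k k" and Y: "Y \<in> carrier_mat k k"
  shows "\<Phi> (X - Y) = \<Phi> X - \<Phi> Y"
proof -
  have "X - Y = 1 \<cdot>\<^sub>m X + (-1) \<cdot>\<^sub>m Y" using X Y by (intro eq_matI) auto
  moreover have "1 \<cdot>\<^sub>m \<Phi> X + (-1) \<cdot>\<^sub>m \<Phi> Y = \<Phi> X - \<Phi> Y"
    using linear_mat_map_carrier[OF L X] linear_mat_map_carrier[OF L Y] by (intro eq_matI) auto
  ultimately show ?thesis using linear_mat_map_lincomb[OF L X Y] by simp
qed

lemma positive_mat_map_mono:
  assumes L: "linear_mat_map k n \<Phi>" and P: "positive_mat_map k n \<Phi>" and le: "loewner_le k A B"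
  shows "loewner_le n (\<Phi> A) (\<Phi> B)"
proof -
  have A: "A \<in> carrier_mat k k" and B: "B \<in> carrier_mat k k" using le unfolding loewner_le_def by auto
  have "psd_mat n (\<Phi> (B - A))" using P le unfolding positive_mat_map_def loewner_le_def by blast
  then show ?thesis
    unfolding loewner_le_def linear_mat_map_minus[OF L B A]
    using linear_mat_map_carrier[OF L] A B by blast
qed

text \<open>Positive definiteness means \<open>A \<ge> \<mu> I\<close> for some \<open>\<mu> > 0\<close>, which a positive unital map
  preserves.\<close>

lemma positive_unital_mat_map_pd:
  assumes L: "linear_mat_map k n \<Phi>" and P: "positive_mat_map k n \<Phi>" and U: "unital_mat_map k n \<Phi>"
    and A: "pd_mat k A"
  shows "pd_mat n (\<Phi> A)"
proof -
  obtain V d where "pos_diag_decomp k A V d" using pd_mat_imp_pos_diag_decomp[OF A] .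
  then obtain \<mu> where \<mu>: "0 < \<mu>" and le: "loewner_le k (complex_of_real \<mu> \<cdot>\<^sub>m 1\<^sub>m k) A"
    by (rule pos_diag_decomp_loewner_ge_scalar)
  have "\<Phi> (complex_of_real \<mu> \<cdot>\<^sub>m 1\<^sub>m k) = complex_of_real \<mu> \<cdot>\<^sub>m 1\<^sub>m n"
    using L U unfolding linear_mat_map_def unital_mat_map_def by simp
  then show ?thesis
    using positive_mat_map_mono[OF L P le] by (intro pd_mat_if_loewner_ge_scalar[OF \<mu>]) simp
qed

section \<open>From the Loewner order to the trace\<close>

lemma powr_convex_nonpos:
  assumes "r \<le> 0"
  shows "convex_on {0<..} (\<lambda>x::real. x powr r)"
proof (rule f''_ge0_imp_convex[where f' = "\<lambda>x. r * x powr (r - 1)" and f'' = "\<lambda>x. r * ((r - 1) * x powr (r - 1 - 1))"])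
  fix x :: real assume x: "x \<in> {0<..}"
  show "DERIV (\<lambda>x. x powr r) x :> r * x powr (r - 1)"
    and "DERIV (\<lambda>x. r * x powr (r - 1)) x :> r * ((r - 1) * x powr (r - 1 - 1))"
    using x by (auto intro!: derivative_eq_intros)
  have "0 \<le> r * (r - 1)" using assms by (simp add: mult_nonpos_nonpos)
  then show "0 \<le> r * ((r - 1) * x powr (r - 1 - 1))"
    using x by (simp add: mult.assoc[symmetric])
qed simp

lemma doubly_stochastic_jensen:
  fixes g :: "real \<Rightarrow> real" and w :: "nat \<Rightarrow> nat \<Rightarrow> real"
  assumes g: "convex_on {0<..} g" and v: "\<forall>j<n. 0 < v j" and w: "\<forall>i<n. \<forall>j<n. 0 \<le> w i j"
    and rows: "\<forall>i<n. (\<Sum>j<n. w i j) = 1" and cols: "\<forall>j<n. (\<Sum>i<n. w i j) = 1"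
  shows "(\<Sum>i<n. g (\<Sum>j<n. w i j * v j)) \<le> (\<Sum>j<n. g (v j))"
proof -
  have "g (\<Sum>j<n. w i j * v j) \<le> (\<Sum>j<n. w i j * g (v j))" if i: "i < n" for i
  proof -
    have "{..<n} \<noteq> {}" using i by auto
    then show ?thesis
      using convex_on_sum[where S = "{..<n}" and a = "w i" and y = v, OF finite_lessThan _ g]
        rows w v i by simp
  qed
  then have "(\<Sum>i<n. g (\<Sum>j<n. w i j * v j)) \<le> (\<Sum>i<n. \<Sum>j<n. w i j * g (v j))"
    by (intro sum_mono) simp
  also have "\<dots> = (\<Sum>j<n. (\<Sum>i<n. w i j) * g (v j))"
    by (subst sum.swap) (simp add: sum_distrib_right)
  finally show ?thesis using cols by simp
qed

lemma stochastic_comb_pos: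
  fixes v w :: "nat \<Rightarrow> real"
  assumes v: "\<forall>j<n. 0 < v j" and w: "\<forall>j<n. 0 \<le> w j" and rows: "(\<Sum>j<n. w j) = 1"
  shows "0 < (\<Sum>j<n. w j * v j)"
  using convex_sum[where S = "{..<n}" and C = "{0<..}" and a = w and y = v] v w rows by simp

lemma quad_form_col_unitary:
  assumes V: "pos_diag_decomp n V UV v" and W: "unitary_mat n W" and i: "i < n"
  shows "Re (quad_form V (col W i)) = (\<Sum>j<n. (cmod ((mat_adjoint UV * W) $$ (j,i)))^2 * v j)"
proof -
  have UV: "unitary_mat n UV" and Vd: "V = UV * real_diag_mat n v * mat_adjoint UV"
    using V unfolding pos_diag_decomp_def by auto
  have UVc: "UV \<in> carrier_mat n n" and Wc: "W \<in> carrier_mat n n"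
    using UV W unitary_mat_carrier by auto
  have "(mat_adjoint UV *\<^sub>v col W i) $ j = (mat_adjoint UV * W) $$ (j,i)" if "j < n" for j
    using UVc Wc i that by (simp add: col_mult2[symmetric])
  then have "spectral_weight UV (col W i) j = (cmod ((mat_adjoint UV * W) $$ (j,i)))^2" if "j < n" for j
    using that unfolding spectral_weight_def by simp
  moreover have "quad_form V (col W i) = complex_of_real (\<Sum>j<n. v j * spectral_weight UV (col W i) j)"
    unfolding Vd by (rule quad_form_diag[OF UVc]) (use Wc i in simp)
  ultimately show ?thesis by (simp add: mult.commute)
qed

lemma quad_form_eigenvector:
  assumes Z: "pos_diag_decomp n Z U z" and i: "i < n"
  shows "Re (quad_form Z (col U i)) = z i"
proof -
  have U: "unitary_mat n U" using Z unfolding pos_diag_decomp_def by simp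
  have "(\<Sum>j<n. (cmod ((mat_adjoint U * U) $$ (j,i)))^2 * z j) = z i"
    using U i unfolding unitary_mat_def by (subst sum_single_point[OF i]) auto
  then show ?thesis using quad_form_col_unitary[OF Z U i] by simp
qed

text \<open>In the basis \<open>W\<close>, the diagonal entries of \<open>X\<close> are averages of its eigenvalues with the
  doubly stochastic weights \<open>|(U\<^sub>X\<^sup>* W)\<^sub>j\<^sub>i|\<^sup>2\<close>.\<close>

lemma sum_convex_le_of_diagonal:
  assumes X: "pos_diag_decomp n X UX x" and Y: "pos_diag_decomp n Y UY y"
    and W: "unitary_mat n W" and s: "0 \<le> s" "s \<le> 1" and g: "convex_on {0<..} g"
    and H: "\<forall>i<n. g (z i) \<le> g ((1 - s) * Re (quad_form X (col W i)) + s * Re (quad_form Y (col W i)))"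
  shows "(\<Sum>i<n. g (z i)) \<le> (1 - s) * (\<Sum>j<n. g (x j)) + s * (\<Sum>j<n. g (y j))"
proof -
  define wX where "wX i j = (cmod ((mat_adjoint UX * W) $$ (j,i)))^2" for i j
  define wY where "wY i j = (cmod ((mat_adjoint UY * W) $$ (j,i)))^2" for i j
  have x: "\<forall>j<n. 0 < x j" and y: "\<forall>j<n. 0 < y j" and UX: "unitary_mat n UX" and UY: "unitary_mat n UY"
    using X Y unfolding pos_diag_decomp_def by auto
  have MX: "unitary_mat n (mat_adjoint UX * W)" and MY: "unitary_mat n (mat_adjoint UY * W)"
    using unitary_mat_mult[OF unitary_mat_adjoint W] UX UY by auto
  have rows: "\<forall>i<n. (\<Sum>j<n. wX i j) = 1" "\<forall>i<n. (\<Sum>j<n. wY i j) = 1"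
    unfolding wX_def wY_def using unitary_col_sq_norm[OF MX] unitary_col_sq_norm[OF MY] by auto
  have cols: "\<forall>j<n. (\<Sum>i<n. wX i j) = 1" "\<forall>j<n. (\<Sum>i<n. wY i j) = 1"
    unfolding wX_def wY_def using unitary_row_sq_norm[OF MX] unitary_row_sq_norm[OF MY] by auto
  have nonneg: "\<forall>i<n. \<forall>j<n. 0 \<le> wX i j" "\<forall>i<n. \<forall>j<n. 0 \<le> wY i j"
    unfolding wX_def wY_def by simp_all
  have "g (z i) \<le> (1 - s) * g (\<Sum>j<n. wX i j * x j) + s * g (\<Sum>j<n. wY i j * y j)" if i: "i < n" for i
  proof -
    have "0 < (\<Sum>j<n. wX i j * x j)" "0 < (\<Sum>j<n. wY i j * y j)"
      using rows nonneg i x y by (auto intro!: stochastic_comb_pos)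
    moreover have "g (z i) \<le> g ((1 - s) * (\<Sum>j<n. wX i j * x j) + s * (\<Sum>j<n. wY i j * y j))"
      using H[rule_format, OF i]
      unfolding quad_form_col_unitary[OF X W i] quad_form_col_unitary[OF Y W i] wX_def wY_def .
    ultimately show ?thesis
      using convex_onD[OF g, of s "\<Sum>j<n. wX i j * x j" "\<Sum>j<n. wY i j * y j"] s by simp
  qed
  then have "(\<Sum>i<n. g (z i))
      \<le> (\<Sum>i<n. (1 - s) * g (\<Sum>j<n. wX i j * x j) + s * g (\<Sum>j<n. wY i j * y j))"
    by (intro sum_mono) simp
  also have "\<dots> = (1 - s) * (\<Sum>i<n. g (\<Sum>j<n. wX i j * x j)) + s * (\<Sum>i<n. g (\<Sum>j<n. wY i j * y j))"
    by (simp add: sum.distrib sum_distrib_left)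
  also have "\<dots> \<le> (1 - s) * (\<Sum>j<n. g (x j)) + s * (\<Sum>j<n. g (y j))"
    using doubly_stochastic_jensen[OF g x nonneg(1) rows(1) cols(1)]
      doubly_stochastic_jensen[OF g y nonneg(2) rows(2) cols(2)] s
    by (intro add_mono mult_left_mono) auto
  finally show ?thesis .
qed

theorem trace_rpow_le_of_loewner:
  assumes X: "pd_mat n X" and Y: "pd_mat n Y" and Z: "pd_mat n Z" and s: "0 \<le> s" "s \<le> 1"
    and ord: "(r \<le> 0 \<and> loewner_le n (complex_of_real (1 - s) \<cdot>\<^sub>m X + complex_of_real s \<cdot>\<^sub>m Y) Z)
      \<or> (1 \<le> r \<and> loewner_le n Z (complex_of_real (1 - s) \<cdot>\<^sub>m X + complex_of_real s \<cdot>\<^sub>m Y))"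
  shows "Re (trace_mat (mat_rpow Z r))
    \<le> (1 - s) * Re (trace_mat (mat_rpow X r)) + s * Re (trace_mat (mat_rpow Y r))"
proof -
  obtain UX x UY y UZ z where dX: "pos_diag_decomp n X UX x" and dY: "pos_diag_decomp n Y UY y"
    and dZ: "pos_diag_decomp n Z UZ z"
    using pd_mat_imp_pos_diag_decomp X Y Z by metis
  have g: "convex_on {0<..} (\<lambda>x. x powr r)"
    using ord powr_convex_nonpos powr_convex by blast
  have UZ: "unitary_mat n UZ" using dZ unfolding pos_diag_decomp_def by simp
  have "(\<Sum>i<n. z i powr r) \<le> (1 - s) * (\<Sum>j<n. x j powr r) + s * (\<Sum>j<n. y j powr r)"
  proof (rule sum_convex_le_of_diagonal[OF dX dY UZ s g], intro allI impI)
    fix i assume i: "i < n"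
    define u where "u = col UZ i"
    have u: "u \<in> carrier_vec n" and u0: "u \<noteq> 0\<^sub>v n"
      unfolding u_def using unitary_mat_carrier[OF UZ] unitary_col_neq_zero[OF UZ i] by auto
    define m where "m = (1 - s) * Re (quad_form X u) + s * Re (quad_form Y u)"
    have qM: "Re (quad_form (complex_of_real (1 - s) \<cdot>\<^sub>m X + complex_of_real s \<cdot>\<^sub>m Y) u) = m"
      unfolding m_def using quad_form_lincomb[OF pd_mat_carrier[OF X] pd_mat_carrier[OF Y] u]
      by (simp del: of_real_diff)
    have "0 < m"
      using pd_mat_convex_comb[OF X Y s] u u0 qM unfolding pd_mat_def by blast
    moreover have zi: "Re (quad_form Z u) = z i" and "0 < z i"
      unfolding u_def using quad_form_eigenvector[OF dZ i] dZ i unfolding pos_diag_decomp_def by auto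
    ultimately show "z i powr r \<le> m powr r"
      using ord
    proof (elim disjE conjE)
      assume r: "r \<le> 0" and le: "loewner_le n (complex_of_real (1 - s) \<cdot>\<^sub>m X + complex_of_real s \<cdot>\<^sub>m Y) Z"
      have "m \<le> z i" using loewner_le_quad_form(2)[OF le u] qM zi by simp
      then show ?thesis using powr_mono2'[OF r \<open>0 < m\<close>] by simp
    next
      assume r: "1 \<le> r" and le: "loewner_le n Z (complex_of_real (1 - s) \<cdot>\<^sub>m X + complex_of_real s \<cdot>\<^sub>m Y)"
      have "z i \<le> m" using loewner_le_quad_form(2)[OF le u] qM zi by simp
      then show ?thesis using powr_mono2[of r "z i" m] r \<open>0 < z i\<close> by simp
    qed
  qed
  then show ?thesis
    using trace_mat_rpow[OF dX] trace_mat_rpow[OF dY] trace_mat_rpow[OF dZ] by simp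
qed

lemma positive_mat_map_rpow_loewner:
  assumes L: "linear_mat_map k n \<Phi>" and P: "positive_mat_map k n \<Phi>"
    and A: "pd_mat k A" and B: "pd_mat k B" and s: "0 \<le> s" "s \<le> 1"
    and p: "-1 \<le> p" "p \<le> 1" "p \<noteq> 0"
  defines "M \<equiv> complex_of_real (1 - s) \<cdot>\<^sub>m \<Phi> (mat_rpow A p) + complex_of_real s \<cdot>\<^sub>m \<Phi> (mat_rpow B p)"
    and "Z \<equiv> \<Phi> (mat_rpow (complex_of_real (1 - s) \<cdot>\<^sub>m A + complex_of_real s \<cdot>\<^sub>m B) p)"
  shows "(-1/p \<le> 0 \<and> loewner_le n M Z) \<or> (1 \<le> -1/p \<and> loewner_le n Z M)"
proof -
  have M: "\<Phi> (complex_of_real (1 - s) \<cdot>\<^sub>m mat_rpow A p + complex_of_real s \<cdot>\<^sub>m mat_rpow B p) = M"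
    unfolding M_def using pd_mat_carrier[OF pd_mat_rpow[OF A]] pd_mat_carrier[OF pd_mat_rpow[OF B]]
    by (rule linear_mat_map_lincomb[OF L])
  show ?thesis
  proof (cases "0 < p")
    case True
    then show ?thesis
      using positive_mat_map_mono[OF L P mat_rpow_operator_concave[OF A B s True p(2)]]
      unfolding M Z_def by simp
  next
    case False
    then have "p < 0" "1 \<le> -1/p" using p by (simp_all add: field_simps)
    then show ?thesis
      using positive_mat_map_mono[OF L P mat_rpow_operator_convex[OF A B s p(1)]]
      unfolding M Z_def by simp
  qed
qed

theorem corollary3p8:
  fixes k n :: nat and \<Phi> :: "complex mat \<Rightarrow> complex mat" and p :: real
  assumes "linear_mat_map k n \<Phi>" and "positive_mat_map k n \<Phi>" and "unital_mat_map k n \<Phi>"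
    and "-1 \<le> p" and "p \<le> 1" and "p \<noteq> 0"
  shows "\<forall>A B t. pd_mat k A \<longrightarrow> pd_mat k B \<longrightarrow> 0 \<le> t \<longrightarrow> t \<le> 1 \<longrightarrow>
    Re (trace_mat (mat_rpow (\<Phi> (mat_rpow ((1 - t) \<cdot>\<^sub>m A + t \<cdot>\<^sub>m B) p)) (-1/p)))
      \<le> (1 - t) * Re (trace_mat (mat_rpow (\<Phi> (mat_rpow A p)) (-1/p)))
        + t * Re (trace_mat (mat_rpow (\<Phi> (mat_rpow B p)) (-1/p)))"
proof (intro allI impI)
  fix A B :: "complex mat" and t :: real
  assume A: "pd_mat k A" and B: "pd_mat k B" and t: "0 \<le> t" "t \<le> 1"
  have pd: "pd_mat n (\<Phi> (mat_rpow M p))" if "pd_mat k M" for M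
    by (rule positive_unital_mat_map_pd[OF assms(1-3) pd_mat_rpow[OF that]])
  from trace_rpow_le_of_loewner[OF pd[OF A] pd[OF B] pd[OF pd_mat_convex_comb[OF A B t]] t
      positive_mat_map_rpow_loewner[OF assms(1,2) A B t assms(4-6)]]
  show "Re (trace_mat (mat_rpow (\<Phi> (mat_rpow ((1 - complex_of_real t) \<cdot>\<^sub>m A + complex_of_real t \<cdot>\<^sub>m B) p)) (-1/p)))
      \<le> (1 - t) * Re (trace_mat (mat_rpow (\<Phi> (mat_rpow A p)) (-1/p)))
        + t * Re (trace_mat (mat_rpow (\<Phi> (mat_rpow B p)) (-1/p)))"
    by simp
qed

end
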